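(* Let $\mathcal V$ be a descent category, $T$ a finite simplicial set, $S\subset T$ a simplicial subset, and $f:X\to Y$ a hypercover of simplicial spaces. Then the induced morphism $\mathrm{Map}(T,X)\to\mathrm{Map}(S\hookrightarrow T,f)$ is a cover.
   Context: A descent category is a small category $\mathcal V$ with a subcategory of morphisms called covers such that: $\mathcal V$ has finite limits; pullbacks of covers are covers; if $f$ and $g\circ f$ are covers then $g$ is a cover. A simplicial space is a simplicial object in $\mathcal V$. A finite simplicial set has finitely many nondegenerate simplices; $\mathrm{Map}(T,X)$ is the finite limit representing simplicial maps $T\to X$; $\mathrm{Map}(S\hookrightarrow T,f)=\mathrm{Map}(S,X)\times_{\mathrm{Map}(S,Y)}\mathrm{Map}(T,Y)$. A morphism $f:X\to Y$ is a hypercover if $X_n\to\mathrm{Map}(\partial\Delta^n\hookrightarrow\Delta^n,f)$ is a cover for all $n\ge0$. *)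

theory Defs
  imports Main
begin

record ('o,'m) cat =
  Obj  :: "'o set"
  Arr  :: "'m set"
  Dom  :: "'m \<Rightarrow> 'o"
  Cod  :: "'m \<Rightarrow> 'o"
  Comp :: "'m \<Rightarrow> 'm \<Rightarrow> 'm"   (* Comp C g f = g o f *)
  Idm  :: "'o \<Rightarrow> 'm"

definition hom :: "('o,'m) cat \<Rightarrow> 'o \<Rightarrow> 'o \<Rightarrow> 'm set" where
  "hom C a b = {f \<in> Arr C. Dom C f = a \<and> Cod C f = b}"

definition is_category :: "('o,'m) cat \<Rightarrow> bool" where
  "is_category C \<longleftrightarrow>
     (\<forall>f\<in>Arr C. Dom C f \<in> Obj C \<and> Cod C f \<in> Obj C) \<and>
     (\<forall>a\<in>Obj C. Idm C a \<in> hom C a a) \<and>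
     (\<forall>f\<in>Arr C. \<forall>g\<in>Arr C. Cod C f = Dom C g \<longrightarrow> Comp C g f \<in> hom C (Dom C f) (Cod C g)) \<and>
     (\<forall>f\<in>Arr C. Comp C f (Idm C (Dom C f)) = f \<and> Comp C (Idm C (Cod C f)) f = f) \<and>
     (\<forall>f\<in>Arr C. \<forall>g\<in>Arr C. \<forall>h\<in>Arr C. Cod C f = Dom C g \<longrightarrow> Cod C g = Dom C h \<longrightarrow>
        Comp C h (Comp C g f) = Comp C (Comp C h g) f)"

definition is_pullback :: "('o,'m) cat \<Rightarrow> 'm \<Rightarrow> 'm \<Rightarrow> 'o \<Rightarrow> 'm \<Rightarrow> 'm \<Rightarrow> bool" where
  "is_pullback C a b P p1 p2 \<longleftrightarrow>
     a \<in> Arr C \<and> b \<in> Arr C \<and> Cod C a = Cod C b \<and> P \<in> Obj C \<and>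
     p1 \<in> hom C P (Dom C a) \<and> p2 \<in> hom C P (Dom C b) \<and> Comp C a p1 = Comp C b p2 \<and>
     (\<forall>Q q1 q2. Q \<in> Obj C \<and> q1 \<in> hom C Q (Dom C a) \<and> q2 \<in> hom C Q (Dom C b) \<and>
        Comp C a q1 = Comp C b q2 \<longrightarrow>
        (\<exists>!u. u \<in> hom C Q P \<and> Comp C p1 u = q1 \<and> Comp C p2 u = q2))"

definition is_terminal :: "('o,'m) cat \<Rightarrow> 'o \<Rightarrow> bool" where
  "is_terminal C t \<longleftrightarrow> t \<in> Obj C \<and> (\<forall>a\<in>Obj C. \<exists>!u. u \<in> hom C a t)"

text \<open>Finite limits: equivalently, a terminal object and all pullbacks.\<close>
definition has_finite_limits :: "('o,'m) cat \<Rightarrow> bool" where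
  "has_finite_limits C \<longleftrightarrow> (\<exists>t. is_terminal C t) \<and>
     (\<forall>a b. a \<in> Arr C \<and> b \<in> Arr C \<and> Cod C a = Cod C b \<longrightarrow> (\<exists>P p1 p2. is_pullback C a b P p1 p2))"

definition descent_category :: "('o,'m) cat \<Rightarrow> 'm set \<Rightarrow> bool" where
  "descent_category C cov \<longleftrightarrow>
     is_category C \<and> has_finite_limits C \<and>
     cov \<subseteq> Arr C \<and>
     (\<forall>a\<in>Obj C. Idm C a \<in> cov) \<and>
     (\<forall>f\<in>cov. \<forall>g\<in>cov. Cod C f = Dom C g \<longrightarrow> Comp C g f \<in> cov) \<and>
     (\<forall>a b P p1 p2. is_pullback C a b P p1 p2 \<and> b \<in> cov \<longrightarrow> p1 \<in> cov) \<and>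
     (\<forall>f g. f \<in> cov \<and> g \<in> Arr C \<and> Cod C f = Dom C g \<and> Comp C g f \<in> cov \<longrightarrow> g \<in> cov)"

text \<open>Monotone maps [m] -> [n], [m] = {0..m}, represented extensionally (value 0 outside [m]).\<close>
definition dmor :: "nat \<Rightarrow> nat \<Rightarrow> (nat \<Rightarrow> nat) set" where
  "dmor m n = {\<theta>. (\<forall>i\<le>m. \<theta> i \<le> n) \<and> (\<forall>i j. i \<le> j \<longrightarrow> j \<le> m \<longrightarrow> \<theta> i \<le> \<theta> j) \<and>
                  (\<forall>i. m < i \<longrightarrow> \<theta> i = 0)}"

definition dcomp :: "nat \<Rightarrow> (nat \<Rightarrow> nat) \<Rightarrow> (nat \<Rightarrow> nat) \<Rightarrow> (nat \<Rightarrow> nat)" where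
  "dcomp k \<theta> \<phi> = (\<lambda>i. if i \<le> k then \<theta> (\<phi> i) else 0)"

definition did :: "nat \<Rightarrow> (nat \<Rightarrow> nat)" where
  "did n = (\<lambda>i. if i \<le> n then i else 0)"

text \<open>Act T m n theta : T_n -> T_m for theta : [m] -> [n].\<close>
record 'a sset =
  Simp :: "nat \<Rightarrow> 'a set"
  Act  :: "nat \<Rightarrow> nat \<Rightarrow> (nat \<Rightarrow> nat) \<Rightarrow> 'a \<Rightarrow> 'a"

definition is_sset :: "'a sset \<Rightarrow> bool" where
  "is_sset T \<longleftrightarrow>
     (\<forall>m n \<theta> x. \<theta> \<in> dmor m n \<longrightarrow> x \<in> Simp T n \<longrightarrow> Act T m n \<theta> x \<in> Simp T m) \<and>
     (\<forall>n x. x \<in> Simp T n \<longrightarrow> Act T n n (did n) x = x) \<and>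
     (\<forall>k m n \<phi> \<theta> x. \<phi> \<in> dmor k m \<longrightarrow> \<theta> \<in> dmor m n \<longrightarrow> x \<in> Simp T n \<longrightarrow>
        Act T k m \<phi> (Act T m n \<theta> x) = Act T k n (dcomp k \<theta> \<phi>) x)"

definition degenerate :: "'a sset \<Rightarrow> nat \<Rightarrow> 'a \<Rightarrow> bool" where
  "degenerate T n x \<longleftrightarrow> (\<exists>m<n. \<exists>\<theta>\<in>dmor n m. \<exists>y\<in>Simp T m. x = Act T n m \<theta> y)"

definition finite_sset :: "'a sset \<Rightarrow> bool" where
  "finite_sset T \<longleftrightarrow> is_sset T \<and> finite {(n, x). x \<in> Simp T n \<and> \<not> degenerate T n x}"

definition is_subsset :: "'a sset \<Rightarrow> 'a sset \<Rightarrow> bool" where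
  "is_subsset S T \<longleftrightarrow> is_sset S \<and> is_sset T \<and> (\<forall>n. Simp S n \<subseteq> Simp T n) \<and>
     (\<forall>m n \<theta> x. \<theta> \<in> dmor m n \<longrightarrow> x \<in> Simp S n \<longrightarrow> Act S m n \<theta> x = Act T m n \<theta> x)"

definition simplex :: "nat \<Rightarrow> (nat \<Rightarrow> nat) sset" where
  "simplex n = \<lparr>Simp = (\<lambda>m. dmor m n), Act = (\<lambda>k m \<phi> \<theta>. dcomp k \<theta> \<phi>)\<rparr>"

definition bdry :: "nat \<Rightarrow> (nat \<Rightarrow> nat) sset" where
  "bdry n = \<lparr>Simp = (\<lambda>m. {\<theta> \<in> dmor m n. \<not> ({..n} \<subseteq> \<theta> ` {..m})}),
             Act = (\<lambda>k m \<phi> \<theta>. dcomp k \<theta> \<phi>)\<rparr>"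

text \<open>SMor X m n theta : X_n -> X_m for theta : [m] -> [n].\<close>
record ('o,'m) sobj =
  SOb  :: "nat \<Rightarrow> 'o"
  SMor :: "nat \<Rightarrow> nat \<Rightarrow> (nat \<Rightarrow> nat) \<Rightarrow> 'm"

definition is_sobj :: "('o,'m) cat \<Rightarrow> ('o,'m) sobj \<Rightarrow> bool" where
  "is_sobj C X \<longleftrightarrow>
     (\<forall>n. SOb X n \<in> Obj C) \<and>
     (\<forall>m n \<theta>. \<theta> \<in> dmor m n \<longrightarrow> SMor X m n \<theta> \<in> hom C (SOb X n) (SOb X m)) \<and>
     (\<forall>n. SMor X n n (did n) = Idm C (SOb X n)) \<and>
     (\<forall>k m n \<phi> \<theta>. \<phi> \<in> dmor k m \<longrightarrow> \<theta> \<in> dmor m n \<longrightarrow>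
        Comp C (SMor X k m \<phi>) (SMor X m n \<theta>) = SMor X k n (dcomp k \<theta> \<phi>))"

definition is_smap :: "('o,'m) cat \<Rightarrow> ('o,'m) sobj \<Rightarrow> ('o,'m) sobj \<Rightarrow> (nat \<Rightarrow> 'm) \<Rightarrow> bool" where
  "is_smap C X Y f \<longleftrightarrow> is_sobj C X \<and> is_sobj C Y \<and>
     (\<forall>n. f n \<in> hom C (SOb X n) (SOb Y n)) \<and>
     (\<forall>m n \<theta>. \<theta> \<in> dmor m n \<longrightarrow> Comp C (f m) (SMor X m n \<theta>) = Comp C (SMor Y m n \<theta>) (f n))"

definition is_cone :: "('o,'m) cat \<Rightarrow> 'a sset \<Rightarrow> ('o,'m) sobj \<Rightarrow> 'o \<Rightarrow> (nat \<Rightarrow> 'a \<Rightarrow> 'm) \<Rightarrow> bool" where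
  "is_cone C T X L c \<longleftrightarrow> L \<in> Obj C \<and>
     (\<forall>n. \<forall>x\<in>Simp T n. c n x \<in> hom C L (SOb X n)) \<and>
     (\<forall>m n \<theta> x. \<theta> \<in> dmor m n \<longrightarrow> x \<in> Simp T n \<longrightarrow>
        Comp C (SMor X m n \<theta>) (c n x) = c m (Act T m n \<theta> x))"

text \<open>(L,c) is Map(T,X): the limit representing simplicial maps T -> X.\<close>
definition is_Map :: "('o,'m) cat \<Rightarrow> 'a sset \<Rightarrow> ('o,'m) sobj \<Rightarrow> 'o \<Rightarrow> (nat \<Rightarrow> 'a \<Rightarrow> 'm) \<Rightarrow> bool" where
  "is_Map C T X L c \<longleftrightarrow> is_cone C T X L c \<and>
     (\<forall>L' c'. is_cone C T X L' c' \<longrightarrow>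
        (\<exists>!u. u \<in> hom C L' L \<and> (\<forall>n. \<forall>x\<in>Simp T n. Comp C (c n x) u = c' n x)))"

text \<open>P = Map(S -> T, f) = Map(S,X) x_{Map(S,Y)} Map(T,Y) (for some choice of the
  limits and of the pullback), and v : K -> P is the morphism induced by the cone (K,k)
  over T in X (in particular, by Map(T,X) itself).\<close>
definition is_relmatch ::
  "('o,'m) cat \<Rightarrow> 'a sset \<Rightarrow> 'a sset \<Rightarrow> ('o,'m) sobj \<Rightarrow> ('o,'m) sobj \<Rightarrow> (nat \<Rightarrow> 'm) \<Rightarrow>
   'o \<Rightarrow> (nat \<Rightarrow> 'a \<Rightarrow> 'm) \<Rightarrow> 'o \<Rightarrow> 'm \<Rightarrow> bool" where
  "is_relmatch C S T X Y f K k P v \<longleftrightarrow>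
     (\<exists>MSX cSX MSY cSY MTY cTY a b p1 p2.
        is_Map C S X MSX cSX \<and> is_Map C S Y MSY cSY \<and> is_Map C T Y MTY cTY \<and>
        a \<in> hom C MSX MSY \<and> (\<forall>n. \<forall>x\<in>Simp S n. Comp C (cSY n x) a = Comp C (f n) (cSX n x)) \<and>
        b \<in> hom C MTY MSY \<and> (\<forall>n. \<forall>x\<in>Simp S n. Comp C (cSY n x) b = cTY n x) \<and>
        is_pullback C a b P p1 p2 \<and>
        v \<in> hom C K P \<and>
        (\<forall>n. \<forall>x\<in>Simp S n. Comp C (cSX n x) (Comp C p1 v) = k n x) \<and>
        (\<forall>n. \<forall>x\<in>Simp T n. Comp C (cTY n x) (Comp C p2 v) = Comp C (f n) (k n x)))"

text \<open>Hypercover: X_n -> Map(boundary(n) -> Delta^n, f) is a cover for all n, where X_n is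
  Map(Delta^n, X) via the Yoneda cone (theta |-> X(theta)).\<close>
definition hypercover :: "('o,'m) cat \<Rightarrow> 'm set \<Rightarrow> ('o,'m) sobj \<Rightarrow> ('o,'m) sobj \<Rightarrow> (nat \<Rightarrow> 'm) \<Rightarrow> bool" where
  "hypercover C cov X Y f \<longleftrightarrow> is_smap C X Y f \<and>
     (\<forall>n P v. is_relmatch C (bdry n) (simplex n) X Y f (SOb X n) (\<lambda>m \<theta>. SMor X m n \<theta>) P v
        \<longrightarrow> v \<in> cov)"

end

theory Submission
  imports Defs
begin

text \<open>Induct on the number of nondegenerate simplices of \<open>T\<close> outside \<open>S\<close>. If there are none, then
  \<open>S = T\<close> and the comparison map \<open>Map(T, X) \<rightarrow> Map(S \<hookrightarrow> T, f)\<close> is an isomorphism. Otherwise pick such a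
  simplex \<open>x\<close> of minimal dimension \<open>n\<close>; its boundary lies in \<open>S\<close>, so \<open>S' = S \<union> x\<close> arises from \<open>S\<close> by
  attaching \<open>\<Delta>\<^sup>n\<close> along \<open>\<partial>\<Delta>\<^sup>n\<close>. The comparison map for \<open>S \<subseteq> T\<close> is the one for \<open>S' \<subseteq> T\<close>, a cover by
  induction, followed by a pullback of the one for \<open>S \<subseteq> S'\<close>. Since
  \<open>Map(S', -) = Map(S, -) \<times>\<^bsub>Map(\<partial>\<Delta>\<^sup>n, -)\<^esub> (-)\<^sub>n\<close>, the latter is in turn a pullback of the hypercover
  map \<open>X\<^sub>n \<rightarrow> Map(\<partial>\<Delta>\<^sup>n \<hookrightarrow> \<Delta>\<^sup>n, f)\<close>. Covers are stable under pullback and composition, and finite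
  limits provide all mapping objects involved (those of \<open>\<partial>\<Delta>\<^sup>n\<close> by induction on \<open>n\<close>).\<close>

section \<open>The simplex category\<close>

definition dsurj :: "nat \<Rightarrow> nat \<Rightarrow> (nat \<Rightarrow> nat) \<Rightarrow> bool" where
  "dsurj m n \<theta> \<longleftrightarrow> {..n} \<subseteq> \<theta> ` {..m}"

lemma dmorI:
  "(\<And>i. i \<le> m \<Longrightarrow> \<theta> i \<le> n) \<Longrightarrow> (\<And>i j. i \<le> j \<Longrightarrow> j \<le> m \<Longrightarrow> \<theta> i \<le> \<theta> j) \<Longrightarrow>
   (\<And>i. m < i \<Longrightarrow> \<theta> i = 0) \<Longrightarrow> \<theta> \<in> dmor m n"
  by (auto simp: dmor_def)

lemma dmorD:
  assumes "\<theta> \<in> dmor m n"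
  shows "i \<le> m \<Longrightarrow> \<theta> i \<le> n" "i \<le> j \<Longrightarrow> j \<le> m \<Longrightarrow> \<theta> i \<le> \<theta> j" "m < i \<Longrightarrow> \<theta> i = 0"
  using assms by (auto simp: dmor_def)

lemma dcomp_dmor: "\<phi> \<in> dmor k m \<Longrightarrow> \<theta> \<in> dmor m n \<Longrightarrow> dcomp k \<theta> \<phi> \<in> dmor k n"
  unfolding dmor_def dcomp_def by auto

lemma did_dmor: "did n \<in> dmor n n"
  unfolding dmor_def did_def by auto

lemma dcomp_did_right: "\<theta> \<in> dmor m n \<Longrightarrow> dcomp m \<theta> (did m) = \<theta>"
  unfolding dmor_def dcomp_def did_def by (auto simp: fun_eq_iff)

lemma dcomp_did_left: "\<theta> \<in> dmor m n \<Longrightarrow> dcomp m (did n) \<theta> = \<theta>"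
  unfolding dmor_def dcomp_def did_def by (auto simp: fun_eq_iff)

lemma dcomp_assoc:
  "\<psi> \<in> dmor j k \<Longrightarrow> \<phi> \<in> dmor k m \<Longrightarrow> dcomp j \<theta> (dcomp j \<phi> \<psi>) = dcomp j (dcomp k \<theta> \<phi>) \<psi>"
  unfolding dmor_def dcomp_def by (auto simp: fun_eq_iff)

lemma dsurj_dcomp: "\<phi> \<in> dmor k m \<Longrightarrow> dsurj k m \<phi> \<Longrightarrow> dsurj m n \<theta> \<Longrightarrow> dsurj k n (dcomp k \<theta> \<phi>)"
  unfolding dsurj_def dcomp_def by (force simp: image_iff subset_iff)

lemma dsurj_dcompD: "\<phi> \<in> dmor k m \<Longrightarrow> dsurj k n (dcomp k \<theta> \<phi>) \<Longrightarrow> dsurj m n \<theta>"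
  unfolding dsurj_def dcomp_def dmor_def by (force simp: image_iff subset_iff)

lemma dsurj_section:
  assumes \<sigma>: "\<sigma> \<in> dmor m n" "dsurj m n \<sigma>" and i: "i \<le> m"
  obtains \<delta> where "\<delta> \<in> dmor n m" "dcomp n \<sigma> \<delta> = did n" "\<delta> (\<sigma> i) = i"
proof -
  define \<delta> where
    "\<delta> = (\<lambda>j. if j \<le> n then (if j = \<sigma> i then i else (SOME p. p \<le> m \<and> \<sigma> p = j)) else 0)"
  have pre: "\<delta> j \<le> m \<and> \<sigma> (\<delta> j) = j" if "j \<le> n" for j
  proof (cases "j = \<sigma> i")
    case False
    have "\<exists>p. p \<le> m \<and> \<sigma> p = j" using \<sigma>(2) that unfolding dsurj_def by force
    from someI_ex[OF this] show ?thesis using False that by (simp add: \<delta>_def)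
  qed (use i that in \<open>simp add: \<delta>_def\<close>)
  have mono: "\<delta> a \<le> \<delta> b" if "a \<le> b" "b \<le> n" for a b
  proof (rule ccontr)
    assume "\<not> \<delta> a \<le> \<delta> b"
    then have "\<sigma> (\<delta> b) \<le> \<sigma> (\<delta> a)" using dmorD(2)[OF \<sigma>(1), of "\<delta> b" "\<delta> a"] pre[of a] that by auto
    then show False using pre[of a] pre[of b] that \<open>\<not> \<delta> a \<le> \<delta> b\<close> by simp
  qed
  have "\<delta> \<in> dmor n m"
    by (rule dmorI) (use pre mono in \<open>auto simp: \<delta>_def\<close>)
  moreover have "dcomp n \<sigma> \<delta> = did n"
    using pre by (auto simp: dcomp_def did_def fun_eq_iff)
  moreover have "\<delta> (\<sigma> i) = i" using dmorD(1)[OF \<sigma>(1) i] by (simp add: \<delta>_def)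
  ultimately show ?thesis using that by blast
qed

lemma dsurj_endo_eq_did:
  assumes \<tau>: "\<tau> \<in> dmor n n" and "dsurj n n \<tau>"
  shows "\<tau> = did n"
proof -
  have "\<tau> ` {..n} = {..n}" using assms dmorD(1)[OF \<tau>] unfolding dsurj_def by auto
  then have inj: "inj_on \<tau> {..n}" by (simp add: eq_card_imp_inj_on)
  have less: "\<tau> a < \<tau> b" if "a < b" "b \<le> n" for a b
    using dmorD(2)[OF \<tau>, of a b] inj that
    by (metis le_less less_imp_le_nat inj_on_def atMost_iff order.trans less_irrefl)
  have ge: "i \<le> \<tau> i" if "i \<le> n" for i
    using that
  proof (induction i)
    case (Suc i)
    then show ?case using less[of i "Suc i"] by simp
  qed simp
  have le: "\<tau> (n - d) \<le> n - d" if "d \<le> n" for d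
    using that
  proof (induction d)
    case (Suc d)
    then have "\<tau> (n - Suc d) < \<tau> (n - d)" using less[of "n - Suc d" "n - d"] by simp
    with Suc show ?case by simp
  qed (use dmorD(1)[OF \<tau>, of n] in simp)
  have "\<tau> i = i" if "i \<le> n" for i using ge[OF that] le[of "n - i"] that by simp
  then show ?thesis using dmorD(3)[OF \<tau>] by (auto simp: did_def fun_eq_iff)
qed

text \<open>A non-surjection misses some \<open>j\<close> and so factors through the coface \<open>[n - 1] \<rightarrow> [n]\<close> skipping \<open>j\<close>.\<close>
lemma not_dsurj_factor_coface:
  assumes \<tau>: "\<tau> \<in> dmor m n" and "\<not> dsurj m n \<tau>"
  obtains \<tau>' d where "0 < n" "\<tau>' \<in> dmor m (n - 1)" "d \<in> dmor (n - 1) n" "\<tau> = dcomp m d \<tau>'"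
proof -
  obtain j where j: "j \<le> n" "j \<notin> \<tau> ` {..m}" using assms(2) unfolding dsurj_def by auto
  have ne: "\<tau> i \<noteq> j" if "i \<le> m" for i using j that by auto
  have "n \<noteq> 0" using ne[of 0] dmorD(1)[OF \<tau>, of 0] j(1) by auto
  define d where "d = (\<lambda>i. if i \<le> n - 1 then (if i < j then i else i + 1) else 0)"
  define \<tau>' where "\<tau>' = (\<lambda>i. if i \<le> m then (if \<tau> i < j then \<tau> i else \<tau> i - 1) else 0)"
  have "d \<in> dmor (n - 1) n" by (rule dmorI) (use \<open>n \<noteq> 0\<close> j in \<open>auto simp: d_def\<close>)
  moreover have "\<tau>' \<in> dmor m (n - 1)"
  proof (rule dmorI)
    show "\<tau>' i \<le> n - 1" if "i \<le> m" for i
      using that dmorD(1)[OF \<tau>, of i] ne[of i] j by (auto simp: \<tau>'_def)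
    show "\<tau>' a \<le> \<tau>' b" if "a \<le> b" "b \<le> m" for a b
      using that dmorD(2)[OF \<tau>, of a b] ne[of a] ne[of b] by (auto simp: \<tau>'_def)
  qed (simp add: \<tau>'_def)
  moreover have "\<tau> = dcomp m d \<tau>'"
  proof
    fix i show "\<tau> i = dcomp m d \<tau>' i"
      using ne[of i] dmorD(1)[OF \<tau>, of i] dmorD(3)[OF \<tau>, of i] j
      by (cases "i \<le> m") (auto simp: dcomp_def d_def \<tau>'_def)
  qed
  ultimately show ?thesis using that \<open>n \<noteq> 0\<close> by blast
qed

text \<open>Two equal adjacent values let \<open>\<theta>\<close> factor through the codegeneracy \<open>[k] \<rightarrow> [k - 1]\<close> merging them.\<close>
lemma dmor_factor_codegeneracy:
  assumes \<theta>: "\<theta> \<in> dmor k n" and i: "Suc i \<le> k" "\<theta> i = \<theta> (Suc i)"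
  obtains s \<theta>' where "s \<in> dmor k (k - 1)" "dsurj k (k - 1) s" "\<theta>' \<in> dmor (k - 1) n"
    "\<theta> = dcomp k \<theta>' s"
proof -
  define s where "s = (\<lambda>j. if j \<le> k then (if j \<le> i then j else j - 1) else 0)"
  define \<theta>' where "\<theta>' = (\<lambda>j. if j \<le> k - 1 then (if j \<le> i then \<theta> j else \<theta> (Suc j)) else 0)"
  have "s \<in> dmor k (k - 1)" by (rule dmorI) (use i in \<open>auto simp: s_def\<close>)
  moreover have "dsurj k (k - 1) s"
    unfolding dsurj_def
  proof
    fix j assume "j \<in> {..k - 1}"
    then show "j \<in> s ` {..k}"
      using i by (cases "j \<le> i") (force simp: s_def, auto simp: s_def intro!: image_eqI[of _ _ "Suc j"])
  qed
  moreover have "\<theta>' \<in> dmor (k - 1) n"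
  proof (rule dmorI)
    show "\<theta>' j \<le> n" if "j \<le> k - 1" for j using that dmorD(1)[OF \<theta>] i by (auto simp: \<theta>'_def)
    show "\<theta>' a \<le> \<theta>' b" if "a \<le> b" "b \<le> k - 1" for a b
      using that dmorD(2)[OF \<theta>, of a b] dmorD(2)[OF \<theta>, of a "Suc b"] dmorD(2)[OF \<theta>, of "Suc a" "Suc b"] i
      by (auto simp: \<theta>'_def)
  qed (simp add: \<theta>'_def)
  moreover have "\<theta> = dcomp k \<theta>' s"
  proof
    fix j show "\<theta> j = dcomp k \<theta>' s j"
    proof (cases "j \<le> k")
      case True
      then show ?thesis using i by (cases "j \<le> i"; cases "j = Suc i") (auto simp: dcomp_def s_def \<theta>'_def)
    qed (use dmorD(3)[OF \<theta>] in \<open>simp add: dcomp_def\<close>)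
  qed
  ultimately show ?thesis using that by blast
qed

section \<open>Simplicial sets\<close>

lemma sset_act: "is_sset T \<Longrightarrow> \<theta> \<in> dmor m n \<Longrightarrow> x \<in> Simp T n \<Longrightarrow> Act T m n \<theta> x \<in> Simp T m"
  unfolding is_sset_def by blast

lemma sset_id: "is_sset T \<Longrightarrow> x \<in> Simp T n \<Longrightarrow> Act T n n (did n) x = x"
  unfolding is_sset_def by blast

lemma sset_comp:
  "is_sset T \<Longrightarrow> \<phi> \<in> dmor k m \<Longrightarrow> \<theta> \<in> dmor m n \<Longrightarrow> x \<in> Simp T n \<Longrightarrow>
   Act T k m \<phi> (Act T m n \<theta> x) = Act T k n (dcomp k \<theta> \<phi>) x"
  unfolding is_sset_def by blast

lemma subsset_sset: "is_subsset S T \<Longrightarrow> is_sset S" "is_subsset S T \<Longrightarrow> is_sset T"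
  unfolding is_subsset_def by auto

lemma subsset_Simp: "is_subsset S T \<Longrightarrow> x \<in> Simp S n \<Longrightarrow> x \<in> Simp T n"
  unfolding is_subsset_def by blast

lemma subsset_Act:
  "is_subsset S T \<Longrightarrow> \<theta> \<in> dmor m n \<Longrightarrow> x \<in> Simp S n \<Longrightarrow> Act S m n \<theta> x = Act T m n \<theta> x"
  unfolding is_subsset_def by blast

lemma subsset_act:
  "is_subsset S T \<Longrightarrow> \<theta> \<in> dmor m n \<Longrightarrow> x \<in> Simp S n \<Longrightarrow> Act T m n \<theta> x \<in> Simp S m"
  unfolding is_subsset_def is_sset_def by metis

lemma nondeg_fixed_imp_dsurj:
  assumes T: "is_sset T" and x: "x \<in> Simp T n" "\<not> degenerate T n x"
    and \<tau>: "\<tau> \<in> dmor n n" "Act T n n \<tau> x = x"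
  shows "dsurj n n \<tau>"
proof (rule ccontr)
  assume "\<not> dsurj n n \<tau>"
  with \<tau>(1) obtain \<tau>' d where
    "0 < n" "\<tau>' \<in> dmor n (n - 1)" "d \<in> dmor (n - 1) n" "\<tau> = dcomp n d \<tau>'"
    by (rule not_dsurj_factor_coface)
  moreover from this have "x = Act T n (n - 1) \<tau>' (Act T (n - 1) n d x)"
    using \<tau>(2) sset_comp[OF T _ _ x(1)] by simp
  ultimately have "degenerate T n x"
    unfolding degenerate_def using sset_act[OF T _ x(1)] by (intro exI[of _ "n - 1"]) auto
  with x(2) show False by simp
qed

text \<open>The uniqueness half of the Eilenberg-Zilber lemma: a degeneracy of a nondegenerate simplex
  determines the degeneracy.\<close>
lemma nondeg_dsurj_act_cancel:
  assumes T: "is_sset T" and x: "x \<in> Simp T n" "\<not> degenerate T n x"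
    and \<sigma>: "\<sigma> \<in> dmor m n" "dsurj m n \<sigma>" and \<rho>: "\<rho> \<in> dmor m n"
    and eq: "Act T m n \<sigma> x = Act T m n \<rho> x"
  shows "\<sigma> = \<rho>"
proof
  fix i show "\<sigma> i = \<rho> i"
  proof (cases "i \<le> m")
    case True
    with \<sigma> obtain \<delta> where \<delta>: "\<delta> \<in> dmor n m" "dcomp n \<sigma> \<delta> = did n" "\<delta> (\<sigma> i) = i"
      by (rule dsurj_section)
    have \<rho>\<delta>: "dcomp n \<rho> \<delta> \<in> dmor n n" using dcomp_dmor[OF \<delta>(1) \<rho>] .
    have "x = Act T n m \<delta> (Act T m n \<sigma> x)"
      using sset_comp[OF T \<delta>(1) \<sigma>(1) x(1)] \<delta>(2) sset_id[OF T x(1)] by simp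
    also have "\<dots> = Act T n n (dcomp n \<rho> \<delta>) x" using eq sset_comp[OF T \<delta>(1) \<rho> x(1)] by simp
    finally have "dcomp n \<rho> \<delta> = did n"
      using dsurj_endo_eq_did[OF \<rho>\<delta> nondeg_fixed_imp_dsurj[OF T x \<rho>\<delta>]] by simp
    then have "dcomp n \<rho> \<delta> (\<sigma> i) = did n (\<sigma> i)" by simp
    then show ?thesis using \<delta>(3) dmorD(1)[OF \<sigma>(1) True] by (simp add: dcomp_def did_def)
  qed (use dmorD(3)[OF \<sigma>(1)] dmorD(3)[OF \<rho>] in simp)
qed

lemma dsurj_act_notin_subsset:
  assumes S: "is_subsset S T" and x: "x \<in> Simp T n" "x \<notin> Simp S n"
    and \<sigma>: "\<sigma> \<in> dmor m n" "dsurj m n \<sigma>"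
  shows "Act T m n \<sigma> x \<notin> Simp S m"
proof
  assume "Act T m n \<sigma> x \<in> Simp S m"
  moreover obtain \<delta> where \<delta>: "\<delta> \<in> dmor n m" "dcomp n \<sigma> \<delta> = did n"
    using dsurj_section[OF \<sigma>, of 0] by auto
  ultimately have "Act T n m \<delta> (Act T m n \<sigma> x) \<in> Simp S n" using subsset_act[OF S] by blast
  moreover have "Act T n m \<delta> (Act T m n \<sigma> x) = x"
    using sset_comp[OF subsset_sset(2)[OF S] \<delta>(1) \<sigma>(1) x(1)] \<delta>(2) sset_id[OF subsset_sset(2)[OF S] x(1)]
    by simp
  ultimately show False using x(2) by simp
qed

text \<open>\<open>attach T S n x\<close> is the simplicial subset \<open>S \<union> x\<close> of \<open>T\<close>; it is obtained from \<open>S\<close> by attaching a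
  single cell \<open>\<Delta>\<^sup>n\<close> along \<open>\<partial>\<Delta>\<^sup>n\<close> when \<open>x\<close> is attachable.\<close>
definition attach :: "'a sset \<Rightarrow> 'a sset \<Rightarrow> nat \<Rightarrow> 'a \<Rightarrow> 'a sset" where
  "attach T S n x = \<lparr>Simp = (\<lambda>m. Simp S m \<union> (\<lambda>\<theta>. Act T m n \<theta> x) ` dmor m n), Act = Act T\<rparr>"

definition attachable :: "'a sset \<Rightarrow> 'a sset \<Rightarrow> nat \<Rightarrow> 'a \<Rightarrow> bool" where
  "attachable T S n x \<longleftrightarrow> is_subsset S T \<and> x \<in> Simp T n \<and> \<not> degenerate T n x \<and> x \<notin> Simp S n \<and>
     (\<forall>m \<theta>. \<theta> \<in> dmor m n \<longrightarrow> \<not> dsurj m n \<theta> \<longrightarrow> Act T m n \<theta> x \<in> Simp S m)"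

lemma attach_simps:
  "Simp (attach T S n x) m = Simp S m \<union> (\<lambda>\<theta>. Act T m n \<theta> x) ` dmor m n"
  "Act (attach T S n x) = Act T"
  by (simp_all add: attach_def)

lemma attach_subsset:
  assumes S: "is_subsset S T" and x: "x \<in> Simp T n"
  shows "is_subsset (attach T S n x) T"
proof -
  have T: "is_sset T" using subsset_sset[OF S] by simp
  have sub: "Simp (attach T S n x) m \<subseteq> Simp T m" for m
    using subsset_Simp[OF S] sset_act[OF T _ x] by (auto simp: attach_simps)
  have closed: "Act T k m \<phi> y \<in> Simp (attach T S n x) k"
    if \<phi>: "\<phi> \<in> dmor k m" and y: "y \<in> Simp (attach T S n x) m" for k m \<phi> y
    using y subsset_act[OF S \<phi>] sset_comp[OF T \<phi> _ x] dcomp_dmor[OF \<phi>] by (auto simp: attach_simps)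
  have "is_sset (attach T S n x)"
    unfolding is_sset_def using closed sub sset_id[OF T] sset_comp[OF T]
    by (auto simp: attach_simps(2) simp del: attach_simps(1) dest: subsetD[OF sub])
  then show ?thesis unfolding is_subsset_def using T sub by (simp add: attach_simps)
qed

lemma subsset_attach:
  assumes "is_subsset S T" "x \<in> Simp T n"
  shows "is_subsset S (attach T S n x)"
  using attach_subsset[OF assms] assms(1) unfolding is_subsset_def by (auto simp: attach_simps)

lemma attach_mem: "is_sset T \<Longrightarrow> x \<in> Simp T n \<Longrightarrow> x \<in> Simp (attach T S n x) n"
  using sset_id[of T x n] did_dmor[of n] by (force simp: attach_simps)

lemma attach_new_simplex:
  assumes "attachable T S n x" "y \<in> Simp (attach T S n x) m" "y \<notin> Simp S m"
  obtains \<sigma> where "\<sigma> \<in> dmor m n" "dsurj m n \<sigma>" "y = Act T m n \<sigma> x"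
  using assms unfolding attachable_def by (auto simp: attach_simps)

lemma attachableD:
  assumes "attachable T S n x"
  shows "is_subsset S T" "x \<in> Simp T n" "is_sset T" "is_subsset (attach T S n x) T"
    "is_subsset S (attach T S n x)" "x \<in> Simp (attach T S n x) n"
  using assms subsset_sset attach_subsset subsset_attach attach_mem unfolding attachable_def by metis+

definition nondeg_outside :: "'a sset \<Rightarrow> 'a sset \<Rightarrow> (nat \<times> 'a) set" where
  "nondeg_outside T S = {(n, x). x \<in> Simp T n \<and> \<not> degenerate T n x \<and> x \<notin> Simp S n}"

lemma finite_nondeg_outside: "finite_sset T \<Longrightarrow> finite (nondeg_outside T S)"
  unfolding finite_sset_def nondeg_outside_def by (rule finite_subset[rotated]) auto

text \<open>Every simplex is a degeneracy of one of lower or equal dimension that is nondegenerate.\<close>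
lemma subsset_of_nondeg_below:
  assumes S: "is_subsset S T"
    and nondeg: "\<And>k y. k < N \<Longrightarrow> y \<in> Simp T k \<Longrightarrow> \<not> degenerate T k y \<Longrightarrow> y \<in> Simp S k"
  shows "k < N \<Longrightarrow> y \<in> Simp T k \<Longrightarrow> y \<in> Simp S k"
proof (induction k arbitrary: y rule: less_induct)
  case (less k)
  show ?case
  proof (cases "degenerate T k y")
    case True
    then obtain m \<theta> z where "m < k" "\<theta> \<in> dmor k m" "z \<in> Simp T m" "y = Act T k m \<theta> z"
      unfolding degenerate_def by blast
    then show ?thesis using less subsset_act[OF S] by auto
  qed (use nondeg less in blast)
qed

lemma nondeg_outside_empty:
  "is_subsset S T \<Longrightarrow> nondeg_outside T S = {} \<Longrightarrow> Simp S n = Simp T n"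
  using subsset_of_nondeg_below[of S T "Suc n" n] subsset_Simp[of S T]
  unfolding nondeg_outside_def by blast

text \<open>A nondegenerate simplex outside \<open>S\<close> of minimal dimension has its boundary in \<open>S\<close>.\<close>
lemma exists_attachable:
  assumes S: "is_subsset S T" and ne: "nondeg_outside T S \<noteq> {}"
  obtains n x where "attachable T S n x" "nondeg_outside T (attach T S n x) \<subset> nondeg_outside T S"
proof -
  have T: "is_sset T" using subsset_sset[OF S] by simp
  obtain n where "\<exists>x. (n, x) \<in> nondeg_outside T S"
    and least: "\<And>k y. k < n \<Longrightarrow> (k, y) \<notin> nondeg_outside T S"
    using exists_least_iff[of "\<lambda>n. \<exists>x. (n, x) \<in> nondeg_outside T S"] ne by auto
  then obtain x where nx: "(n, x) \<in> nondeg_outside T S" by blast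
  have x: "x \<in> Simp T n" using nx unfolding nondeg_outside_def by simp
  have below: "y \<in> Simp S k" if "k < n" "y \<in> Simp T k" for k y
    using subsset_of_nondeg_below[OF S _ that] least unfolding nondeg_outside_def by blast
  have "Act T m n \<theta> x \<in> Simp S m" if \<theta>: "\<theta> \<in> dmor m n" "\<not> dsurj m n \<theta>" for m \<theta>
  proof -
    from \<theta> obtain \<tau>' d where n: "0 < n" and \<tau>': "\<tau>' \<in> dmor m (n - 1)"
      and d: "d \<in> dmor (n - 1) n" and \<theta>_eq: "\<theta> = dcomp m d \<tau>'"
      by (rule not_dsurj_factor_coface)
    have "Act T (n - 1) n d x \<in> Simp S (n - 1)" using below[OF _ sset_act[OF T d x]] n by simp
    from subsset_act[OF S \<tau>' this] show ?thesis using sset_comp[OF T \<tau>' d x] \<theta>_eq by simp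
  qed
  then have "attachable T S n x" using nx S unfolding attachable_def nondeg_outside_def by auto
  moreover have "nondeg_outside T (attach T S n x) \<subset> nondeg_outside T S"
    using attach_mem[OF T x, of S] nx unfolding nondeg_outside_def by (auto simp: attach_simps)
  ultimately show ?thesis using that by blast
qed

lemma simplex_simps: "Simp (simplex n) m = dmor m n" "Act (simplex n) = (\<lambda>k m \<phi> \<theta>. dcomp k \<theta> \<phi>)"
  by (simp_all add: simplex_def)

lemma bdry_simps:
  "\<theta> \<in> Simp (bdry n) m \<longleftrightarrow> \<theta> \<in> dmor m n \<and> \<not> dsurj m n \<theta>"
  "Act (bdry n) = (\<lambda>k m \<phi> \<theta>. dcomp k \<theta> \<phi>)"
  by (auto simp: bdry_def dsurj_def)

lemma simplex_sset: "is_sset (simplex n)"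
  unfolding is_sset_def simplex_simps using dcomp_dmor dcomp_did_right dcomp_assoc by auto

lemma bdry_sset: "is_sset (bdry n)"
  unfolding is_sset_def bdry_simps using dcomp_dmor dcomp_did_right dcomp_assoc dsurj_dcompD by metis

lemma bdry_subsset: "is_subsset (bdry n) (simplex n)"
  unfolding is_subsset_def using bdry_sset simplex_sset by (auto simp: bdry_simps simplex_simps)

lemma bdry_nondeg_inj:
  assumes \<theta>: "\<theta> \<in> Simp (bdry n) k" and nondeg: "\<not> degenerate (bdry n) k \<theta>"
  shows "inj_on \<theta> {..k}"
proof (rule ccontr)
  have \<theta>': "\<theta> \<in> dmor k n" and not_surj: "\<not> dsurj k n \<theta>" using \<theta> bdry_simps by auto
  assume "\<not> inj_on \<theta> {..k}"
  then obtain a b where "a < b" "b \<le> k" "\<theta> a = \<theta> b"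
    unfolding inj_on_def by (metis atMost_iff linorder_neqE_nat)
  then have "Suc a \<le> k" "\<theta> a = \<theta> (Suc a)"
    using dmorD(2)[OF \<theta>', of a "Suc a"] dmorD(2)[OF \<theta>', of "Suc a" b] by auto
  with \<theta>' obtain s \<theta>'' where s: "s \<in> dmor k (k - 1)" "dsurj k (k - 1) s"
    and \<theta>'': "\<theta>'' \<in> dmor (k - 1) n" "\<theta> = dcomp k \<theta>'' s"
    by (rule dmor_factor_codegeneracy)
  have "\<not> dsurj (k - 1) n \<theta>''" using dsurj_dcomp[OF s] \<theta>''(2) not_surj by metis
  then have "degenerate (bdry n) k \<theta>"
    unfolding degenerate_def using \<open>Suc a \<le> k\<close> s \<theta>''
    by (intro exI[of _ "k - 1"] conjI bexI[of _ s] bexI[of _ \<theta>'']) (auto simp: bdry_simps)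
  with nondeg show False by simp
qed

lemma bdry_nondeg_dim_less:
  assumes \<theta>: "\<theta> \<in> Simp (bdry n) k" and "\<not> degenerate (bdry n) k \<theta>"
  shows "k < n"
proof -
  have \<theta>': "\<theta> \<in> dmor k n" and "\<not> dsurj k n \<theta>" using \<theta> bdry_simps by auto
  then have "\<theta> ` {..k} \<subset> {..n}" using dmorD(1)[OF \<theta>'] unfolding dsurj_def by auto
  then have "card (\<theta> ` {..k}) < card {..n}" by (rule psubset_card_mono[OF finite_atMost])
  then show ?thesis using card_image[OF bdry_nondeg_inj[OF assms]] by simp
qed

lemma finite_sset_bdry: "finite_sset (bdry n)"
  unfolding finite_sset_def
proof (intro conjI bdry_sset)
  let ?F = "{\<theta>. \<forall>i. (i \<in> {..n} \<longrightarrow> \<theta> i \<in> {..n}) \<and> (i \<notin> {..n} \<longrightarrow> \<theta> i = 0)}"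
  have sub: "{(k, \<theta>). \<theta> \<in> Simp (bdry n) k \<and> \<not> degenerate (bdry n) k \<theta>} \<subseteq> {..<n} \<times> ?F"
  proof clarify
    fix k \<theta> assume \<theta>: "\<theta> \<in> Simp (bdry n) k" and "\<not> degenerate (bdry n) k \<theta>"
    then have k: "k < n" by (rule bdry_nondeg_dim_less)
    have \<theta>': "\<theta> \<in> dmor k n" using \<theta> bdry_simps by simp
    have "\<theta> i \<in> {..n}" for i using dmorD(1,3)[OF \<theta>', of i] by (cases "i \<le> k") auto
    moreover have "\<theta> i = 0" if "i \<notin> {..n}" for i using dmorD(3)[OF \<theta>', of i] k that by simp
    ultimately show "k \<in> {..<n} \<and> \<theta> \<in> ?F" using k by simp
  qed
  have "finite ?F" by (rule finite_set_of_finite_funs) auto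
  then have "finite ({..<n} \<times> ?F)" by simp
  with sub show "finite {(k, \<theta>). \<theta> \<in> Simp (bdry n) k \<and> \<not> degenerate (bdry n) k \<theta>}"
    by (rule finite_subset)
qed

section \<open>Pullbacks, cones and mapping objects\<close>

lemma ex1_unique: "\<exists>!x. P x \<Longrightarrow> P a \<Longrightarrow> P b \<Longrightarrow> a = b"
  by blast

locale category =
  fixes C :: "('o,'m) cat"
  assumes is_category: "is_category C"
begin

lemma hom_obj: "f \<in> hom C a b \<Longrightarrow> a \<in> Obj C \<and> b \<in> Obj C"
  using is_category unfolding is_category_def hom_def by blast

lemma Comp_hom: "f \<in> hom C a b \<Longrightarrow> g \<in> hom C b c \<Longrightarrow> Comp C g f \<in> hom C a c"
  using is_category unfolding is_category_def hom_def by auto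

lemma Comp_assoc:
  "f \<in> hom C a b \<Longrightarrow> g \<in> hom C b c \<Longrightarrow> h \<in> hom C c d \<Longrightarrow>
   Comp C h (Comp C g f) = Comp C (Comp C h g) f"
  using is_category unfolding is_category_def hom_def by auto

lemma Idm_hom: "a \<in> Obj C \<Longrightarrow> Idm C a \<in> hom C a a"
  using is_category unfolding is_category_def by auto

lemma Comp_Idm_right: "f \<in> hom C a b \<Longrightarrow> Comp C f (Idm C a) = f"
  using is_category unfolding is_category_def hom_def by auto

lemma Comp_Idm_left: "f \<in> hom C a b \<Longrightarrow> Comp C (Idm C b) f = f"
  using is_category unfolding is_category_def hom_def by auto

lemma pullbackD:
  assumes "is_pullback C a b P p1 p2" "a \<in> hom C A Z" "b \<in> hom C B Z"
  shows "p1 \<in> hom C P A" "p2 \<in> hom C P B" "Comp C a p1 = Comp C b p2"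
  using assms unfolding is_pullback_def hom_def by auto

lemma pullback_ex1:
  assumes pb: "is_pullback C a b P p1 p2" and a: "a \<in> hom C A Z" and b: "b \<in> hom C B Z"
    and q: "q1 \<in> hom C Q A" "q2 \<in> hom C Q B" "Comp C a q1 = Comp C b q2"
  shows "\<exists>!u. u \<in> hom C Q P \<and> Comp C p1 u = q1 \<and> Comp C p2 u = q2"
proof -
  have A: "Dom C a = A" and B: "Dom C b = B" using a b unfolding hom_def by auto
  have "\<forall>Q q1 q2. Q \<in> Obj C \<and> q1 \<in> hom C Q A \<and> q2 \<in> hom C Q B \<and> Comp C a q1 = Comp C b q2 \<longrightarrow>
      (\<exists>!u. u \<in> hom C Q P \<and> Comp C p1 u = q1 \<and> Comp C p2 u = q2)"
    using pb[unfolded is_pullback_def A B] by (elim conjE)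
  then show ?thesis using q hom_obj[OF q(1)] by blast
qed

lemma pullback_factor:
  assumes "is_pullback C a b P p1 p2" "a \<in> hom C A Z" "b \<in> hom C B Z"
    "q1 \<in> hom C Q A" "q2 \<in> hom C Q B" "Comp C a q1 = Comp C b q2"
  obtains u where "u \<in> hom C Q P" "Comp C p1 u = q1" "Comp C p2 u = q2"
  using ex1_implies_ex[OF pullback_ex1[OF assms]] that by blast

lemma pullback_jointly_monic:
  assumes pb: "is_pullback C a b P p1 p2" and a: "a \<in> hom C A Z" and b: "b \<in> hom C B Z"
    and u: "u \<in> hom C Q P" "u' \<in> hom C Q P"
    and eq: "Comp C p1 u = Comp C p1 u'" "Comp C p2 u = Comp C p2 u'"
  shows "u = u'"
proof -
  note p = pullbackD[OF pb a b]
  have "Comp C a (Comp C p1 u) = Comp C b (Comp C p2 u)"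
    using Comp_assoc[OF u(1) p(1) a] Comp_assoc[OF u(1) p(2) b] p(3) by simp
  from pullback_ex1[OF pb a b Comp_hom[OF u(1) p(1)] Comp_hom[OF u(1) p(2)] this]
  show ?thesis by (rule ex1_unique) (use u eq in simp_all)
qed

lemma pullbackI:
  assumes a: "a \<in> hom C A Z" and b: "b \<in> hom C B Z"
    and p: "p1 \<in> hom C P A" "p2 \<in> hom C P B" "Comp C a p1 = Comp C b p2"
    and factor: "\<And>Q q1 q2. q1 \<in> hom C Q A \<Longrightarrow> q2 \<in> hom C Q B \<Longrightarrow> Comp C a q1 = Comp C b q2 \<Longrightarrow>
        \<exists>u\<in>hom C Q P. Comp C p1 u = q1 \<and> Comp C p2 u = q2"
    and monic: "\<And>Q u u'. u \<in> hom C Q P \<Longrightarrow> u' \<in> hom C Q P \<Longrightarrow>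
        Comp C p1 u = Comp C p1 u' \<Longrightarrow> Comp C p2 u = Comp C p2 u' \<Longrightarrow> u = u'"
  shows "is_pullback C a b P p1 p2"
proof -
  have U: "\<forall>Q q1 q2. Q \<in> Obj C \<and> q1 \<in> hom C Q A \<and> q2 \<in> hom C Q B \<and> Comp C a q1 = Comp C b q2 \<longrightarrow>
      (\<exists>!u. u \<in> hom C Q P \<and> Comp C p1 u = q1 \<and> Comp C p2 u = q2)"
  proof (intro allI impI, elim conjE)
    fix Q q1 q2 assume "Q \<in> Obj C" and q: "q1 \<in> hom C Q A" "q2 \<in> hom C Q B" "Comp C a q1 = Comp C b q2"
    obtain u where u: "u \<in> hom C Q P" "Comp C p1 u = q1" "Comp C p2 u = q2" using factor[OF q] by blast
    show "\<exists>!u. u \<in> hom C Q P \<and> Comp C p1 u = q1 \<and> Comp C p2 u = q2"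
    proof (rule ex1I[of _ u])
      fix w assume w: "w \<in> hom C Q P \<and> Comp C p1 w = q1 \<and> Comp C p2 w = q2"
      show "w = u" by (rule monic[of w Q u]) (use w u in simp_all)
    qed (use u in simp)
  qed
  have da: "Dom C a = A" "a \<in> Arr C" "Cod C a = Z" and db: "Dom C b = B" "b \<in> Arr C" "Cod C b = Z"
    using a b unfolding hom_def by auto
  have "P \<in> Obj C" using hom_obj[OF p(1)] by simp
  with U show ?thesis unfolding is_pullback_def da db using p da(2) db(2) by simp
qed

end

lemma sobj_obj: "is_sobj C X \<Longrightarrow> SOb X n \<in> Obj C"
  unfolding is_sobj_def by blast

lemma sobj_hom: "is_sobj C X \<Longrightarrow> \<theta> \<in> dmor m n \<Longrightarrow> SMor X m n \<theta> \<in> hom C (SOb X n) (SOb X m)"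
  unfolding is_sobj_def by blast

lemma sobj_did: "is_sobj C X \<Longrightarrow> SMor X n n (did n) = Idm C (SOb X n)"
  unfolding is_sobj_def by blast

lemma sobj_comp:
  "is_sobj C X \<Longrightarrow> \<phi> \<in> dmor k m \<Longrightarrow> \<theta> \<in> dmor m n \<Longrightarrow>
   Comp C (SMor X k m \<phi>) (SMor X m n \<theta>) = SMor X k n (dcomp k \<theta> \<phi>)"
  unfolding is_sobj_def by blast

lemma smap_sobj: "is_smap C X Y f \<Longrightarrow> is_sobj C X" "is_smap C X Y f \<Longrightarrow> is_sobj C Y"
  unfolding is_smap_def by auto

lemma smap_hom: "is_smap C X Y f \<Longrightarrow> f n \<in> hom C (SOb X n) (SOb Y n)"
  unfolding is_smap_def by blast

lemma smap_nat:
  "is_smap C X Y f \<Longrightarrow> \<theta> \<in> dmor m n \<Longrightarrow> Comp C (f m) (SMor X m n \<theta>) = Comp C (SMor Y m n \<theta>) (f n)"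
  unfolding is_smap_def by blast

lemma cone_obj: "is_cone C T X L c \<Longrightarrow> L \<in> Obj C"
  unfolding is_cone_def by blast

lemma cone_hom: "is_cone C T X L c \<Longrightarrow> x \<in> Simp T n \<Longrightarrow> c n x \<in> hom C L (SOb X n)"
  unfolding is_cone_def by blast

lemma cone_nat:
  "is_cone C T X L c \<Longrightarrow> \<theta> \<in> dmor m n \<Longrightarrow> x \<in> Simp T n \<Longrightarrow>
   Comp C (SMor X m n \<theta>) (c n x) = c m (Act T m n \<theta> x)"
  unfolding is_cone_def by blast

lemma cone_restrict:
  assumes S: "is_subsset S T" and c: "is_cone C T X L c"
  shows "is_cone C S X L c"
  unfolding is_cone_def
  using cone_obj[OF c] cone_hom[OF c] cone_nat[OF c] subsset_Simp[OF S] subsset_Act[OF S] by simp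

lemma cone_same_Simp:
  assumes S: "is_subsset S T" and eq: "\<And>n. Simp S n = Simp T n" and c: "is_cone C S X L c"
  shows "is_cone C T X L c"
  using c subsset_Act[OF S] unfolding is_cone_def eq by simp

text \<open>Precomposing a cone with the map \<open>B \<rightarrow> T\<close> classified by the \<open>n\<close>-simplex \<open>x\<close>, for \<open>B \<subseteq> \<Delta>\<^sup>n\<close>.\<close>
lemma cone_along_simplex:
  assumes A: "is_subsset A T" and x: "x \<in> Simp T n"
    and B: "\<And>m \<theta>. \<theta> \<in> Simp B m \<Longrightarrow> \<theta> \<in> dmor m n \<and> Act T m n \<theta> x \<in> Simp A m"
    and B_Act: "Act B = (\<lambda>k m \<phi> \<theta>. dcomp k \<theta> \<phi>)"
    and c: "is_cone C A X L c"
  shows "is_cone C B X L (\<lambda>m \<theta>. c m (Act T m n \<theta> x))"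
  unfolding is_cone_def
proof (intro conjI allI impI ballI)
  fix k m \<phi> \<theta> assume \<phi>: "\<phi> \<in> dmor k m" and \<theta>: "\<theta> \<in> Simp B m"
  have "Comp C (SMor X k m \<phi>) (c m (Act T m n \<theta> x)) = c k (Act A k m \<phi> (Act T m n \<theta> x))"
    using cone_nat[OF c \<phi>] B[OF \<theta>] by simp
  also have "\<dots> = c k (Act T k n (dcomp k \<theta> \<phi>) x)"
    using subsset_Act[OF A \<phi>] B[OF \<theta>] sset_comp[OF subsset_sset(2)[OF A] \<phi> _ x] by simp
  finally show "Comp C (SMor X k m \<phi>) (c m (Act T m n \<theta> x)) = c k (Act T k n (Act B k m \<phi> \<theta>) x)"
    using B_Act by simp
next
  fix m \<theta> assume "\<theta> \<in> Simp B m"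
  then show "c m (Act T m n \<theta> x) \<in> hom C L (SOb X m)" using cone_hom[OF c] B by blast
qed (rule cone_obj[OF c])

definition has_Map :: "('o,'m) cat \<Rightarrow> 'a sset \<Rightarrow> ('o,'m) sobj \<Rightarrow> bool" where
  "has_Map C T X \<longleftrightarrow> (\<exists>M c. is_Map C T X M c)"

lemma Map_cone: "is_Map C T X M c \<Longrightarrow> is_cone C T X M c"
  unfolding is_Map_def by simp

lemma Map_factor:
  assumes "is_Map C T X M c" "is_cone C T X L d"
  obtains u where "u \<in> hom C L M" "\<And>n x. x \<in> Simp T n \<Longrightarrow> Comp C (c n x) u = d n x"
proof -
  have "\<exists>!u. u \<in> hom C L M \<and> (\<forall>n. \<forall>x\<in>Simp T n. Comp C (c n x) u = d n x)"
    using assms unfolding is_Map_def by simp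
  from ex1_implies_ex[OF this] show ?thesis using that by blast
qed

lemma Map_empty:
  assumes "is_terminal C t" "\<And>n. Simp E n = {}"
  shows "is_Map C E X t c"
  unfolding is_Map_def is_cone_def using assms unfolding is_terminal_def by auto

definition is_relcone ::
  "('o,'m) cat \<Rightarrow> 'a sset \<Rightarrow> 'a sset \<Rightarrow> ('o,'m) sobj \<Rightarrow> ('o,'m) sobj \<Rightarrow> (nat \<Rightarrow> 'm) \<Rightarrow>
   'o \<Rightarrow> (nat \<Rightarrow> 'a \<Rightarrow> 'm) \<Rightarrow> (nat \<Rightarrow> 'a \<Rightarrow> 'm) \<Rightarrow> bool" where
  "is_relcone C S T X Y f L c d \<longleftrightarrow> is_cone C S X L c \<and> is_cone C T Y L d \<and>
     (\<forall>n. \<forall>x\<in>Simp S n. Comp C (f n) (c n x) = d n x)"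

definition is_relMap ::
  "('o,'m) cat \<Rightarrow> 'a sset \<Rightarrow> 'a sset \<Rightarrow> ('o,'m) sobj \<Rightarrow> ('o,'m) sobj \<Rightarrow> (nat \<Rightarrow> 'm) \<Rightarrow>
   'o \<Rightarrow> (nat \<Rightarrow> 'a \<Rightarrow> 'm) \<Rightarrow> (nat \<Rightarrow> 'a \<Rightarrow> 'm) \<Rightarrow> bool" where
  "is_relMap C S T X Y f P \<alpha> \<beta> \<longleftrightarrow> is_relcone C S T X Y f P \<alpha> \<beta> \<and>
     (\<forall>L c d. is_relcone C S T X Y f L c d \<longrightarrow>
        (\<exists>!u. u \<in> hom C L P \<and> (\<forall>n. \<forall>x\<in>Simp S n. Comp C (\<alpha> n x) u = c n x) \<and>
                              (\<forall>n. \<forall>x\<in>Simp T n. Comp C (\<beta> n x) u = d n x)))"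

definition is_comparison ::
  "('o,'m) cat \<Rightarrow> 'a sset \<Rightarrow> 'a sset \<Rightarrow> (nat \<Rightarrow> 'm) \<Rightarrow> 'o \<Rightarrow> (nat \<Rightarrow> 'a \<Rightarrow> 'm) \<Rightarrow>
   (nat \<Rightarrow> 'a \<Rightarrow> 'm) \<Rightarrow> 'o \<Rightarrow> (nat \<Rightarrow> 'a \<Rightarrow> 'm) \<Rightarrow> 'm \<Rightarrow> bool" where
  "is_comparison C S T f P \<alpha> \<beta> K k v \<longleftrightarrow> v \<in> hom C K P \<and>
     (\<forall>n. \<forall>x\<in>Simp S n. Comp C (\<alpha> n x) v = k n x) \<and>
     (\<forall>n. \<forall>x\<in>Simp T n. Comp C (\<beta> n x) v = Comp C (f n) (k n x))"

lemma comparisonD: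
  assumes "is_comparison C S T f P \<alpha> \<beta> K k v"
  shows "v \<in> hom C K P" "\<And>n x. x \<in> Simp S n \<Longrightarrow> Comp C (\<alpha> n x) v = k n x"
    "\<And>n x. x \<in> Simp T n \<Longrightarrow> Comp C (\<beta> n x) v = Comp C (f n) (k n x)"
  using assms unfolding is_comparison_def by auto

lemma relcone_cone:
  "is_relcone C S T X Y f L c d \<Longrightarrow> is_cone C S X L c"
  "is_relcone C S T X Y f L c d \<Longrightarrow> is_cone C T Y L d"
  "is_relcone C S T X Y f L c d \<Longrightarrow> x \<in> Simp S n \<Longrightarrow> Comp C (f n) (c n x) = d n x"
  unfolding is_relcone_def by auto

lemma relMap_relcone: "is_relMap C S T X Y f P \<alpha> \<beta> \<Longrightarrow> is_relcone C S T X Y f P \<alpha> \<beta>"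
  unfolding is_relMap_def by simp

lemma relMap_factor:
  assumes "is_relMap C S T X Y f P \<alpha> \<beta>" "is_relcone C S T X Y f L c d"
  obtains u where "u \<in> hom C L P" "\<And>n x. x \<in> Simp S n \<Longrightarrow> Comp C (\<alpha> n x) u = c n x"
    "\<And>n x. x \<in> Simp T n \<Longrightarrow> Comp C (\<beta> n x) u = d n x"
proof -
  have "\<exists>!u. u \<in> hom C L P \<and> (\<forall>n. \<forall>x\<in>Simp S n. Comp C (\<alpha> n x) u = c n x) \<and>
      (\<forall>n. \<forall>x\<in>Simp T n. Comp C (\<beta> n x) u = d n x)"
    using assms unfolding is_relMap_def by simp
  from ex1_implies_ex[OF this] show ?thesis using that by blast
qed

context category
begin

lemma cone_comp:
  assumes X: "is_sobj C X" and c: "is_cone C T X L c" and u: "u \<in> hom C L' L"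
  shows "is_cone C T X L' (\<lambda>n x. Comp C (c n x) u)"
  unfolding is_cone_def
proof (intro conjI allI impI ballI)
  fix m n \<theta> x assume "\<theta> \<in> dmor m n" "x \<in> Simp T n"
  then show "Comp C (SMor X m n \<theta>) (Comp C (c n x) u) = Comp C (c m (Act T m n \<theta> x)) u"
    using Comp_assoc[OF u cone_hom[OF c] sobj_hom[OF X]] cone_nat[OF c] by simp
qed (use hom_obj[OF u] Comp_hom[OF u cone_hom[OF c]] in auto)

lemma cone_smap:
  assumes f: "is_smap C X Y f" and c: "is_cone C T X L c"
  shows "is_cone C T Y L (\<lambda>n x. Comp C (f n) (c n x))"
  unfolding is_cone_def
proof (intro conjI allI impI ballI)
  fix m n \<theta> x assume \<theta>: "\<theta> \<in> dmor m n" and x: "x \<in> Simp T n"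
  note homs = cone_hom[OF c x] smap_hom[OF f] sobj_hom[OF smap_sobj(1)[OF f] \<theta>]
    sobj_hom[OF smap_sobj(2)[OF f] \<theta>]
  have "Comp C (SMor Y m n \<theta>) (Comp C (f n) (c n x)) = Comp C (Comp C (f m) (SMor X m n \<theta>)) (c n x)"
    using Comp_assoc[OF homs(1,2,4)] smap_nat[OF f \<theta>] by simp
  also have "\<dots> = Comp C (f m) (c m (Act T m n \<theta> x))"
    using Comp_assoc[OF homs(1,3,2)] cone_nat[OF c \<theta> x] by simp
  finally show "Comp C (SMor Y m n \<theta>) (Comp C (f n) (c n x)) = Comp C (f m) (c m (Act T m n \<theta> x))" .
qed (use cone_obj[OF c] Comp_hom[OF cone_hom[OF c] smap_hom[OF f]] in auto)

lemma relcone_of_cone: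
  assumes "is_subsset S T" "is_smap C X Y f" "is_cone C T X K k"
  shows "is_relcone C S T X Y f K k (\<lambda>n x. Comp C (f n) (k n x))"
  unfolding is_relcone_def using cone_restrict[OF assms(1,3)] cone_smap[OF assms(2,3)] by simp

lemma MapI:
  assumes cone: "is_cone C T X M c"
    and factor: "\<And>L d. is_cone C T X L d \<Longrightarrow>
        \<exists>u\<in>hom C L M. \<forall>n. \<forall>x\<in>Simp T n. Comp C (c n x) u = d n x"
    and monic: "\<And>L u u'. u \<in> hom C L M \<Longrightarrow> u' \<in> hom C L M \<Longrightarrow>
        (\<And>n x. x \<in> Simp T n \<Longrightarrow> Comp C (c n x) u = Comp C (c n x) u') \<Longrightarrow> u = u'"
  shows "is_Map C T X M c"
  unfolding is_Map_def
proof (intro conjI cone allI impI)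
  fix L d assume "is_cone C T X L d"
  from factor[OF this] obtain u where u: "u \<in> hom C L M" "\<forall>n. \<forall>x\<in>Simp T n. Comp C (c n x) u = d n x"
    by blast
  show "\<exists>!u. u \<in> hom C L M \<and> (\<forall>n. \<forall>x\<in>Simp T n. Comp C (c n x) u = d n x)"
  proof (rule ex1I[of _ u])
    fix w assume w: "w \<in> hom C L M \<and> (\<forall>n. \<forall>x\<in>Simp T n. Comp C (c n x) w = d n x)"
    show "w = u" by (rule monic[of w L u]) (use w u in simp_all)
  qed (use u in simp)
qed

lemma Map_eqI:
  assumes M: "is_Map C T X M c" and X: "is_sobj C X" and u: "u \<in> hom C L M" "u' \<in> hom C L M"
    and eq: "\<And>n x. x \<in> Simp T n \<Longrightarrow> Comp C (c n x) u = Comp C (c n x) u'"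
  shows "u = u'"
proof -
  have "is_cone C T X L (\<lambda>n x. Comp C (c n x) u)" using cone_comp[OF X Map_cone[OF M] u(1)] .
  then have "\<exists>!w. w \<in> hom C L M \<and> (\<forall>n. \<forall>x\<in>Simp T n. Comp C (c n x) w = Comp C (c n x) u)"
    using M unfolding is_Map_def by simp
  then show ?thesis by (rule ex1_unique) (use u eq in simp_all)
qed

lemma relMapI:
  assumes relcone: "is_relcone C S T X Y f P \<alpha> \<beta>"
    and factor: "\<And>L c d. is_relcone C S T X Y f L c d \<Longrightarrow> \<exists>u\<in>hom C L P.
        (\<forall>n. \<forall>x\<in>Simp S n. Comp C (\<alpha> n x) u = c n x) \<and> (\<forall>n. \<forall>x\<in>Simp T n. Comp C (\<beta> n x) u = d n x)"
    and monic: "\<And>L u u'. u \<in> hom C L P \<Longrightarrow> u' \<in> hom C L P \<Longrightarrow>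
        (\<And>n x. x \<in> Simp S n \<Longrightarrow> Comp C (\<alpha> n x) u = Comp C (\<alpha> n x) u') \<Longrightarrow>
        (\<And>n x. x \<in> Simp T n \<Longrightarrow> Comp C (\<beta> n x) u = Comp C (\<beta> n x) u') \<Longrightarrow> u = u'"
  shows "is_relMap C S T X Y f P \<alpha> \<beta>"
  unfolding is_relMap_def
proof (intro conjI relcone allI impI)
  fix L c d assume "is_relcone C S T X Y f L c d"
  from factor[OF this] obtain u where u: "u \<in> hom C L P"
    "\<forall>n. \<forall>x\<in>Simp S n. Comp C (\<alpha> n x) u = c n x" "\<forall>n. \<forall>x\<in>Simp T n. Comp C (\<beta> n x) u = d n x"
    by blast
  show "\<exists>!u. u \<in> hom C L P \<and> (\<forall>n. \<forall>x\<in>Simp S n. Comp C (\<alpha> n x) u = c n x) \<and>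
      (\<forall>n. \<forall>x\<in>Simp T n. Comp C (\<beta> n x) u = d n x)"
  proof (rule ex1I[of _ u])
    fix w assume w: "w \<in> hom C L P \<and> (\<forall>n. \<forall>x\<in>Simp S n. Comp C (\<alpha> n x) w = c n x) \<and>
      (\<forall>n. \<forall>x\<in>Simp T n. Comp C (\<beta> n x) w = d n x)"
    show "w = u" by (rule monic[of w L u]) (use w u in simp_all)
  qed (use u in simp)
qed

lemma relMap_eqI:
  assumes R: "is_relMap C S T X Y f P \<alpha> \<beta>" and f: "is_smap C X Y f"
    and u: "u \<in> hom C L P" "u' \<in> hom C L P"
    and eq\<alpha>: "\<And>n x. x \<in> Simp S n \<Longrightarrow> Comp C (\<alpha> n x) u = Comp C (\<alpha> n x) u'"
    and eq\<beta>: "\<And>n x. x \<in> Simp T n \<Longrightarrow> Comp C (\<beta> n x) u = Comp C (\<beta> n x) u'"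
  shows "u = u'"
proof -
  note rc = relMap_relcone[OF R]
  have "Comp C (f n) (Comp C (\<alpha> n x) u) = Comp C (\<beta> n x) u" if "x \<in> Simp S n" for n x
    using Comp_assoc[OF u(1) cone_hom[OF relcone_cone(1)[OF rc] that] smap_hom[OF f]]
      relcone_cone(3)[OF rc that] by simp
  then have "is_relcone C S T X Y f L (\<lambda>n x. Comp C (\<alpha> n x) u) (\<lambda>n x. Comp C (\<beta> n x) u)"
    unfolding is_relcone_def
    using cone_comp[OF smap_sobj(1)[OF f] relcone_cone(1)[OF rc] u(1)]
      cone_comp[OF smap_sobj(2)[OF f] relcone_cone(2)[OF rc] u(1)] by simp
  then have "\<exists>!w. w \<in> hom C L P \<and> (\<forall>n. \<forall>x\<in>Simp S n. Comp C (\<alpha> n x) w = Comp C (\<alpha> n x) u) \<and>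
      (\<forall>n. \<forall>x\<in>Simp T n. Comp C (\<beta> n x) w = Comp C (\<beta> n x) u)"
    using R unfolding is_relMap_def by simp
  then show ?thesis by (rule ex1_unique) (use u eq\<alpha> eq\<beta> in simp_all)
qed

lemma comparison_exists:
  assumes "is_relMap C S T X Y f P \<alpha> \<beta>" "is_subsset S T" "is_smap C X Y f" "is_cone C T X K k"
  obtains v where "is_comparison C S T f P \<alpha> \<beta> K k v"
proof -
  obtain v where "v \<in> hom C K P" "\<And>n x. x \<in> Simp S n \<Longrightarrow> Comp C (\<alpha> n x) v = k n x"
    "\<And>n x. x \<in> Simp T n \<Longrightarrow> Comp C (\<beta> n x) v = Comp C (f n) (k n x)"
    using relMap_factor[OF assms(1) relcone_of_cone[OF assms(2-4)]] by blast
  then have "is_comparison C S T f P \<alpha> \<beta> K k v" unfolding is_comparison_def by simp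
  with that show ?thesis .
qed

lemma comparison_unique:
  assumes P: "is_relMap C S T X Y f P \<alpha> \<beta>" and f: "is_smap C X Y f"
    and v: "is_comparison C S T f P \<alpha> \<beta> K k v" and v': "is_comparison C S T f P \<alpha> \<beta> K k v'"
  shows "v = v'"
  by (rule relMap_eqI[OF P f comparisonD(1)[OF v] comparisonD(1)[OF v']])
    (simp_all add: comparisonD(2,3)[OF v] comparisonD(2,3)[OF v'])

lemma comparison_restrict:
  assumes SS': "is_subsset S S'" and P: "is_relMap C S T X Y f P \<alpha> \<beta>"
    and v': "is_comparison C S' T f P' \<alpha>' \<beta>' K k v'"
    and w: "w \<in> hom C P' P" "\<And>m y. y \<in> Simp S m \<Longrightarrow> Comp C (\<alpha> m y) w = \<alpha>' m y"
      "\<And>m y. y \<in> Simp T m \<Longrightarrow> Comp C (\<beta> m y) w = \<beta>' m y"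
  shows "is_comparison C S T f P \<alpha> \<beta> K k (Comp C w v')"
proof -
  note v' = comparisonD[OF v'] and PR = relMap_relcone[OF P]
  show ?thesis
    unfolding is_comparison_def
    using Comp_hom[OF v'(1) w(1)] Comp_assoc[OF v'(1) w(1) cone_hom[OF relcone_cone(1)[OF PR]]]
      Comp_assoc[OF v'(1) w(1) cone_hom[OF relcone_cone(2)[OF PR]]] w(2,3) v'(2,3) subsset_Simp[OF SS']
    by simp
qed

lemma Map_same_Simp:
  assumes S: "is_subsset S T" and eq: "\<And>n. Simp S n = Simp T n" and M: "is_Map C S X M c"
  shows "is_Map C T X M c"
proof -
  have "is_cone C T X L d \<longleftrightarrow> is_cone C S X L d" for L d
    using cone_restrict[OF S, of C X L d] cone_same_Simp[OF S eq, of C X L d] by blast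
  then show ?thesis using M unfolding is_Map_def eq by simp
qed

text \<open>Yoneda: \<open>X\<^sub>n\<close> is \<open>Map(\<Delta>\<^sup>n, X)\<close>.\<close>
lemma Map_simplex:
  assumes X: "is_sobj C X"
  shows "is_Map C (simplex n) X (SOb X n) (\<lambda>m \<theta>. SMor X m n \<theta>)"
proof (rule MapI)
  show "is_cone C (simplex n) X (SOb X n) (\<lambda>m \<theta>. SMor X m n \<theta>)"
    unfolding is_cone_def simplex_simps using sobj_obj[OF X] sobj_hom[OF X] sobj_comp[OF X] by auto
  have id: "did n \<in> Simp (simplex n) n" using did_dmor by (simp add: simplex_simps)
  fix L d assume d: "is_cone C (simplex n) X L d"
  have "Comp C (SMor X m n \<theta>) (d n (did n)) = d m \<theta>" if "\<theta> \<in> Simp (simplex n) m" for m \<theta>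
    using that cone_nat[OF d _ id] dcomp_did_left by (simp add: simplex_simps)
  then show "\<exists>u\<in>hom C L (SOb X n). \<forall>m. \<forall>\<theta>\<in>Simp (simplex n) m. Comp C (SMor X m n \<theta>) u = d m \<theta>"
    using cone_hom[OF d id] by blast
next
  fix L u u' assume u: "u \<in> hom C L (SOb X n)" "u' \<in> hom C L (SOb X n)"
    and "\<And>m \<theta>. \<theta> \<in> Simp (simplex n) m \<Longrightarrow> Comp C (SMor X m n \<theta>) u = Comp C (SMor X m n \<theta>) u'"
  from this(3)[of "did n" n] show "u = u'"
    using did_dmor Comp_Idm_left[OF u(1)] Comp_Idm_left[OF u(2)] by (simp add: simplex_simps sobj_did[OF X])
qed

context
  fixes f S T X Y MSX cSX MSY cSY MTY cTY a b P p1 p2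
  assumes f: "is_smap C X Y f" and ST: "is_subsset S T"
    and MSX: "is_Map C S X MSX cSX" and MSY: "is_Map C S Y MSY cSY" and MTY: "is_Map C T Y MTY cTY"
    and a: "a \<in> hom C MSX MSY" "\<And>n x. x \<in> Simp S n \<Longrightarrow> Comp C (cSY n x) a = Comp C (f n) (cSX n x)"
    and b: "b \<in> hom C MTY MSY" "\<And>n x. x \<in> Simp S n \<Longrightarrow> Comp C (cSY n x) b = cTY n x"
    and pb: "is_pullback C a b P p1 p2"
begin

lemma relmatch_leg_a:
  "w \<in> hom C L MSX \<Longrightarrow> x \<in> Simp S n \<Longrightarrow>
   Comp C (cSY n x) (Comp C a w) = Comp C (f n) (Comp C (cSX n x) w)"
  using Comp_assoc[OF _ a(1) cone_hom[OF Map_cone[OF MSY]]]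
    Comp_assoc[OF _ cone_hom[OF Map_cone[OF MSX]] smap_hom[OF f]] a(2) by simp

lemma relmatch_leg_b:
  "w \<in> hom C L MTY \<Longrightarrow> x \<in> Simp S n \<Longrightarrow> Comp C (cSY n x) (Comp C b w) = Comp C (cTY n x) w"
  using Comp_assoc[OF _ b(1) cone_hom[OF Map_cone[OF MSY]]] b(2) by simp

lemma relMap_of_pullback:
  "is_relMap C S T X Y f P (\<lambda>n x. Comp C (cSX n x) p1) (\<lambda>n x. Comp C (cTY n x) p2)"
proof (rule relMapI)
  have X: "is_sobj C X" and Y: "is_sobj C Y" using smap_sobj[OF f] by auto
  note cSX = Map_cone[OF MSX] and cTY = Map_cone[OF MTY] and p = pullbackD[OF pb a(1) b(1)]
  have "Comp C (f n) (Comp C (cSX n x) p1) = Comp C (cTY n x) p2" if "x \<in> Simp S n" for n x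
    using relmatch_leg_a[OF p(1) that] relmatch_leg_b[OF p(2) that] p(3) by simp
  then show "is_relcone C S T X Y f P (\<lambda>n x. Comp C (cSX n x) p1) (\<lambda>n x. Comp C (cTY n x) p2)"
    unfolding is_relcone_def using cone_comp[OF X cSX p(1)] cone_comp[OF Y cTY p(2)] by simp
next
  note cSX = Map_cone[OF MSX] and cTY = Map_cone[OF MTY] and p = pullbackD[OF pb a(1) b(1)]
  fix L c d assume r: "is_relcone C S T X Y f L c d"
  obtain u1 where u1: "u1 \<in> hom C L MSX" "\<And>n x. x \<in> Simp S n \<Longrightarrow> Comp C (cSX n x) u1 = c n x"
    using Map_factor[OF MSX relcone_cone(1)[OF r]] by blast
  obtain u2 where u2: "u2 \<in> hom C L MTY" "\<And>n x. x \<in> Simp T n \<Longrightarrow> Comp C (cTY n x) u2 = d n x"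
    using Map_factor[OF MTY relcone_cone(2)[OF r]] by blast
  have "Comp C a u1 = Comp C b u2"
    by (rule Map_eqI[OF MSY smap_sobj(2)[OF f] Comp_hom[OF u1(1) a(1)] Comp_hom[OF u2(1) b(1)]])
      (use relmatch_leg_a[OF u1(1)] relmatch_leg_b[OF u2(1)] u1(2) u2(2) relcone_cone(3)[OF r]
        subsset_Simp[OF ST] in simp)
  then obtain u where u: "u \<in> hom C L P" "Comp C p1 u = u1" "Comp C p2 u = u2"
    using pullback_factor[OF pb a(1) b(1) u1(1) u2(1)] by blast
  then show "\<exists>u\<in>hom C L P. (\<forall>n. \<forall>x\<in>Simp S n. Comp C (Comp C (cSX n x) p1) u = c n x) \<and>
      (\<forall>n. \<forall>x\<in>Simp T n. Comp C (Comp C (cTY n x) p2) u = d n x)"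
    using u1 u2 Comp_assoc[OF u(1) p(1) cone_hom[OF cSX]] Comp_assoc[OF u(1) p(2) cone_hom[OF cTY]]
    by auto
next
  note cSX = Map_cone[OF MSX] and cTY = Map_cone[OF MTY] and p = pullbackD[OF pb a(1) b(1)]
  fix L u u' assume u: "u \<in> hom C L P" "u' \<in> hom C L P"
    and eq1: "\<And>n x. x \<in> Simp S n \<Longrightarrow> Comp C (Comp C (cSX n x) p1) u = Comp C (Comp C (cSX n x) p1) u'"
    and eq2: "\<And>n x. x \<in> Simp T n \<Longrightarrow> Comp C (Comp C (cTY n x) p2) u = Comp C (Comp C (cTY n x) p2) u'"
  have "Comp C p1 u = Comp C p1 u'"
    by (rule Map_eqI[OF MSX smap_sobj(1)[OF f] Comp_hom[OF u(1) p(1)] Comp_hom[OF u(2) p(1)]])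
      (use eq1 Comp_assoc[OF u(1) p(1) cone_hom[OF cSX]] Comp_assoc[OF u(2) p(1) cone_hom[OF cSX]] in simp)
  moreover have "Comp C p2 u = Comp C p2 u'"
    by (rule Map_eqI[OF MTY smap_sobj(2)[OF f] Comp_hom[OF u(1) p(2)] Comp_hom[OF u(2) p(2)]])
      (use eq2 Comp_assoc[OF u(1) p(2) cone_hom[OF cTY]] Comp_assoc[OF u(2) p(2) cone_hom[OF cTY]] in simp)
  ultimately show "u = u'" using pullback_jointly_monic[OF pb a(1) b(1) u] by blast
qed

end

lemma relmatch_imp_comparison:
  assumes f: "is_smap C X Y f" and ST: "is_subsset S T" and R: "is_relmatch C S T X Y f K k P v"
  obtains \<alpha> \<beta> where "is_relMap C S T X Y f P \<alpha> \<beta>" "is_comparison C S T f P \<alpha> \<beta> K k v"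
    "has_Map C S X" "has_Map C S Y" "has_Map C T Y"
proof -
  from R obtain MSX cSX MSY cSY MTY cTY a b p1 p2 where
    MSX: "is_Map C S X MSX cSX" and MSY: "is_Map C S Y MSY cSY" and MTY: "is_Map C T Y MTY cTY"
    and a: "a \<in> hom C MSX MSY" "\<forall>n. \<forall>x\<in>Simp S n. Comp C (cSY n x) a = Comp C (f n) (cSX n x)"
    and b: "b \<in> hom C MTY MSY" "\<forall>n. \<forall>x\<in>Simp S n. Comp C (cSY n x) b = cTY n x"
    and pb: "is_pullback C a b P p1 p2" and v: "v \<in> hom C K P"
    and v1: "\<forall>n. \<forall>x\<in>Simp S n. Comp C (cSX n x) (Comp C p1 v) = k n x"
    and v2: "\<forall>n. \<forall>x\<in>Simp T n. Comp C (cTY n x) (Comp C p2 v) = Comp C (f n) (k n x)"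
    unfolding is_relmatch_def by blast
  note p = pullbackD[OF pb a(1) b(1)]
  have "is_comparison C S T f P (\<lambda>n x. Comp C (cSX n x) p1) (\<lambda>n x. Comp C (cTY n x) p2) K k v"
    unfolding is_comparison_def
    using v v1 v2 Comp_assoc[OF v p(1) cone_hom[OF Map_cone[OF MSX]]]
      Comp_assoc[OF v p(2) cone_hom[OF Map_cone[OF MTY]]] by simp
  moreover have "has_Map C S X" "has_Map C S Y" "has_Map C T Y"
    using MSX MSY MTY unfolding has_Map_def by blast+
  ultimately show ?thesis using that relMap_of_pullback[OF f ST MSX MSY MTY a(1) _ b(1) _ pb] a(2) b(2) by blast
qed

end

locale finite_limits = category +
  assumes has_finite_limits: "has_finite_limits C"
begin

lemma terminal_exists: obtains t where "is_terminal C t"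
  using has_finite_limits unfolding has_finite_limits_def by blast

lemma pullback_exists:
  assumes "a \<in> hom C A Z" "b \<in> hom C B Z"
  obtains P p1 p2 where "is_pullback C a b P p1 p2"
proof -
  have "a \<in> Arr C" "b \<in> Arr C" "Cod C a = Cod C b" using assms unfolding hom_def by auto
  then have "\<exists>P p1 p2. is_pullback C a b P p1 p2"
    using has_finite_limits unfolding has_finite_limits_def by blast
  with that show ?thesis by blast
qed

lemma relMap_pullback_exists:
  assumes f: "is_smap C X Y f" and ST: "is_subsset S T"
    and MSX: "is_Map C S X MSX cSX" and MSY: "is_Map C S Y MSY cSY" and MTY: "is_Map C T Y MTY cTY"
  obtains a b P p1 p2 where
    "a \<in> hom C MSX MSY" "\<And>n x. x \<in> Simp S n \<Longrightarrow> Comp C (cSY n x) a = Comp C (f n) (cSX n x)"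
    "b \<in> hom C MTY MSY" "\<And>n x. x \<in> Simp S n \<Longrightarrow> Comp C (cSY n x) b = cTY n x"
    "is_pullback C a b P p1 p2"
proof -
  obtain a where "a \<in> hom C MSX MSY" "\<And>n x. x \<in> Simp S n \<Longrightarrow> Comp C (cSY n x) a = Comp C (f n) (cSX n x)"
    using Map_factor[OF MSY cone_smap[OF f Map_cone[OF MSX]]] by blast
  moreover obtain b where "b \<in> hom C MTY MSY" "\<And>n x. x \<in> Simp S n \<Longrightarrow> Comp C (cSY n x) b = cTY n x"
    using Map_factor[OF MSY cone_restrict[OF ST Map_cone[OF MTY]]] by blast
  moreover from calculation obtain P p1 p2 where "is_pullback C a b P p1 p2"
    using pullback_exists by metis
  ultimately show ?thesis using that by blast
qed

lemma relMap_exists: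
  assumes "is_smap C X Y f" "is_subsset S T" "has_Map C S X" "has_Map C S Y" "has_Map C T Y"
  obtains P \<alpha> \<beta> where "is_relMap C S T X Y f P \<alpha> \<beta>"
proof -
  obtain MSX cSX MSY cSY MTY cTY where
    M: "is_Map C S X MSX cSX" "is_Map C S Y MSY cSY" "is_Map C T Y MTY cTY"
    using assms(3-5) unfolding has_Map_def by blast
  from relMap_pullback_exists[OF assms(1,2) M] relMap_of_pullback[OF assms(1,2) M] that show ?thesis
    by metis
qed

lemma relmatch_exists:
  assumes f: "is_smap C X Y f" and ST: "is_subsset S T"
    and MSX: "is_Map C S X MSX cSX" and MSY: "is_Map C S Y MSY cSY" and MTY: "is_Map C T Y MTY cTY"
    and k: "is_cone C T X K k"
  obtains P v where "is_relmatch C S T X Y f K k P v"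
proof -
  obtain a b P p1 p2 where a: "a \<in> hom C MSX MSY"
    "\<And>n x. x \<in> Simp S n \<Longrightarrow> Comp C (cSY n x) a = Comp C (f n) (cSX n x)"
    and b: "b \<in> hom C MTY MSY" "\<And>n x. x \<in> Simp S n \<Longrightarrow> Comp C (cSY n x) b = cTY n x"
    and pb: "is_pullback C a b P p1 p2"
    using relMap_pullback_exists[OF f ST MSX MSY MTY] by blast
  note p = pullbackD[OF pb a(1) b(1)]
  obtain v where "is_comparison C S T f P (\<lambda>n x. Comp C (cSX n x) p1) (\<lambda>n x. Comp C (cTY n x) p2) K k v"
    using comparison_exists[OF relMap_of_pullback[OF f ST MSX MSY MTY a b pb] ST f k] by blast
  then have "v \<in> hom C K P" "\<forall>n. \<forall>x\<in>Simp S n. Comp C (cSX n x) (Comp C p1 v) = k n x"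
    "\<forall>n. \<forall>x\<in>Simp T n. Comp C (cTY n x) (Comp C p2 v) = Comp C (f n) (k n x)"
    unfolding is_comparison_def
    using Comp_assoc[OF _ p(1) cone_hom[OF Map_cone[OF MSX]]] Comp_assoc[OF _ p(2) cone_hom[OF Map_cone[OF MTY]]]
    by auto
  then have "is_relmatch C S T X Y f K k P v"
    unfolding is_relmatch_def using MSX MSY MTY a b pb by blast
  with that show ?thesis .
qed

end

section \<open>Attaching a simplex\<close>

text \<open>The cone over \<open>S \<union> x\<close> extending \<open>c\<close> by \<open>g\<close> at \<open>x\<close>: on a new simplex \<open>\<sigma>\<^sup>* x\<close> it is \<open>X(\<sigma>) \<circ> g\<close>, which is
  well defined because \<open>\<sigma>\<close> is determined by \<open>\<sigma>\<^sup>* x\<close> (\<open>nondeg_dsurj_act_cancel\<close>).\<close>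
definition attach_cone ::
  "('o,'m) cat \<Rightarrow> 'a sset \<Rightarrow> 'a sset \<Rightarrow> nat \<Rightarrow> 'a \<Rightarrow> ('o,'m) sobj \<Rightarrow> (nat \<Rightarrow> 'a \<Rightarrow> 'm) \<Rightarrow> 'm \<Rightarrow>
   nat \<Rightarrow> 'a \<Rightarrow> 'm" where
  "attach_cone C T S n x X c g m y = (if y \<in> Simp S m then c m y
     else Comp C (SMor X m n (SOME \<sigma>. \<sigma> \<in> dmor m n \<and> y = Act T m n \<sigma> x)) g)"

lemma attach_cone_eqI:
  assumes att: "attachable T S n x"
    and c1: "is_cone C (attach T S n x) X L c1" and c2: "is_cone C (attach T S n x) X L c2"
    and eq_S: "\<And>m y. y \<in> Simp S m \<Longrightarrow> c1 m y = c2 m y" and eq_x: "c1 n x = c2 n x"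
    and y: "y \<in> Simp (attach T S n x) m"
  shows "c1 m y = c2 m y"
proof (cases "y \<in> Simp S m")
  case False
  with att y obtain \<sigma> where "\<sigma> \<in> dmor m n" "y = Act T m n \<sigma> x" by (rule attach_new_simplex)
  then show ?thesis
    using cone_nat[OF c1 _ attachableD(6)[OF att]] cone_nat[OF c2 _ attachableD(6)[OF att]] eq_x
    by (simp add: attach_simps)
qed (use eq_S in simp)

context category
begin

context
  fixes T S n x X L c g
  assumes att: "attachable T S n x" and X: "is_sobj C X" and c: "is_cone C S X L c"
    and g: "g \<in> hom C L (SOb X n)"
    and compat: "\<And>m \<theta>. \<theta> \<in> dmor m n \<Longrightarrow> \<not> dsurj m n \<theta> \<Longrightarrow>
      c m (Act T m n \<theta> x) = Comp C (SMor X m n \<theta>) g"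
begin

lemma attach_cone_Act:
  assumes \<rho>: "\<rho> \<in> dmor m n"
  shows "attach_cone C T S n x X c g m (Act T m n \<rho> x) = Comp C (SMor X m n \<rho>) g"
proof (cases "dsurj m n \<rho>")
  case True
  have S: "is_subsset S T" and T: "is_sset T" and x: "x \<in> Simp T n"
    using attachableD[OF att] by auto
  have x_nondeg: "\<not> degenerate T n x" and "x \<notin> Simp S n" using att unfolding attachable_def by auto
  then have notin: "Act T m n \<rho> x \<notin> Simp S m" using dsurj_act_notin_subsset[OF S x _ \<rho> True] by simp
  define \<sigma> where "\<sigma> = (SOME \<sigma>. \<sigma> \<in> dmor m n \<and> Act T m n \<rho> x = Act T m n \<sigma> x)"
  have "\<sigma> \<in> dmor m n \<and> Act T m n \<rho> x = Act T m n \<sigma> x"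
    unfolding \<sigma>_def by (rule someI[of _ \<rho>]) (use \<rho> in simp)
  then have "\<rho> = \<sigma>" using nondeg_dsurj_act_cancel[OF T x x_nondeg \<rho> True] by blast
  then show ?thesis using notin by (simp add: attach_cone_def \<sigma>_def)
next
  case False
  then show ?thesis
    using compat[OF \<rho> False] att \<rho> unfolding attachable_def attach_cone_def by simp
qed

lemma attach_cone_at: "attach_cone C T S n x X c g n x = g"
  using attach_cone_Act[OF did_dmor] sset_id[OF attachableD(3,2)[OF att]] sobj_did[OF X]
    Comp_Idm_left[OF g] by simp

lemma attach_cone_is_cone: "is_cone C (attach T S n x) X L (attach_cone C T S n x X c g)"
  unfolding is_cone_def
proof (intro conjI allI impI ballI)
  have S: "is_subsset S T" and T: "is_sset T" and x: "x \<in> Simp T n"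
    using attachableD[OF att] by auto
  fix k m \<phi> y assume \<phi>: "\<phi> \<in> dmor k m" and y: "y \<in> Simp (attach T S n x) m"
  show "Comp C (SMor X k m \<phi>) (attach_cone C T S n x X c g m y) =
      attach_cone C T S n x X c g k (Act (attach T S n x) k m \<phi> y)"
  proof (cases "y \<in> Simp S m")
    case True
    then show ?thesis
      using cone_nat[OF c \<phi> True] subsset_Act[OF S \<phi> True] subsset_act[OF S \<phi> True]
      by (simp add: attach_cone_def attach_simps)
  next
    case False
    with att y obtain \<sigma> where \<sigma>: "\<sigma> \<in> dmor m n" "y = Act T m n \<sigma> x" by (rule attach_new_simplex)
    have "Comp C (SMor X k m \<phi>) (Comp C (SMor X m n \<sigma>) g) = Comp C (SMor X k n (dcomp k \<sigma> \<phi>)) g"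
      using Comp_assoc[OF g sobj_hom[OF X \<sigma>(1)] sobj_hom[OF X \<phi>]] sobj_comp[OF X \<phi> \<sigma>(1)] by simp
    then show ?thesis
      using \<sigma> attach_cone_Act[OF \<sigma>(1)] attach_cone_Act[OF dcomp_dmor[OF \<phi> \<sigma>(1)]] sset_comp[OF T \<phi> \<sigma>(1) x]
      by (simp add: attach_simps)
  qed
next
  fix m y assume y: "y \<in> Simp (attach T S n x) m"
  show "attach_cone C T S n x X c g m y \<in> hom C L (SOb X m)"
  proof (cases "y \<in> Simp S m")
    case False
    with att y obtain \<sigma> where "\<sigma> \<in> dmor m n" "y = Act T m n \<sigma> x" by (rule attach_new_simplex)
    then show ?thesis using attach_cone_Act Comp_hom[OF g sobj_hom[OF X]] by simp
  qed (use cone_hom[OF c] in \<open>simp add: attach_cone_def\<close>)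
qed (rule cone_obj[OF c])

end

text \<open>Attaching \<open>x\<close> makes \<open>Map(S \<union> x, X)\<close> the pullback of \<open>Map(S, X) \<rightarrow> Map(\<partial>\<Delta>\<^sup>n, X) \<leftarrow> X\<^sub>n\<close>.\<close>
context
  fixes T S n x X MS cS MB cB r y M p1 p2
  assumes att: "attachable T S n x" and X: "is_sobj C X"
    and MS: "is_Map C S X MS cS" and MB: "is_Map C (bdry n) X MB cB"
    and r: "r \<in> hom C MS MB" "\<And>m \<theta>. \<theta> \<in> Simp (bdry n) m \<Longrightarrow> Comp C (cB m \<theta>) r = cS m (Act T m n \<theta> x)"
    and y: "y \<in> hom C (SOb X n) MB" "\<And>m \<theta>. \<theta> \<in> Simp (bdry n) m \<Longrightarrow> Comp C (cB m \<theta>) y = SMor X m n \<theta>"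
    and pb: "is_pullback C r y M p1 p2"
begin

lemma attach_pullback_bdry_leg:
  assumes \<theta>: "\<theta> \<in> Simp (bdry n) m" and w: "w \<in> hom C L MS" "w' \<in> hom C L (SOb X n)"
  shows "Comp C (cB m \<theta>) (Comp C r w) = Comp C (cB m \<theta>) (Comp C y w') \<longleftrightarrow>
    Comp C (cS m (Act T m n \<theta> x)) w = Comp C (SMor X m n \<theta>) w'"
  using Comp_assoc[OF w(1) r(1) cone_hom[OF Map_cone[OF MB] \<theta>]] Comp_assoc[OF w(2) y(1) cone_hom[OF Map_cone[OF MB] \<theta>]]
    r(2)[OF \<theta>] y(2)[OF \<theta>] by simp

lemma attach_pullback_compat:
  assumes "\<theta> \<in> dmor m n" "\<not> dsurj m n \<theta>"
  shows "Comp C (cS m (Act T m n \<theta> x)) p1 = Comp C (SMor X m n \<theta>) p2"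
  using attach_pullback_bdry_leg[OF _ pullbackD(1,2)[OF pb r(1) y(1)]] pullbackD(3)[OF pb r(1) y(1)] assms
  by (simp add: bdry_simps)

abbreviation attach_pullback_cone :: "nat \<Rightarrow> 'a \<Rightarrow> 'm" where
  "attach_pullback_cone \<equiv> attach_cone C T S n x X (\<lambda>m z. Comp C (cS m z) p1) p2"

lemma attach_pullback_cone_is_cone: "is_cone C (attach T S n x) X M attach_pullback_cone"
  and attach_pullback_cone_at: "attach_pullback_cone n x = p2"
  using attach_cone_is_cone[OF att X cone_comp[OF X Map_cone[OF MS]] _ attach_pullback_compat]
    attach_cone_at[OF att X cone_comp[OF X Map_cone[OF MS]] _ attach_pullback_compat]
    pullbackD(1,2)[OF pb r(1) y(1)] by auto

lemma Map_attach_factor: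
  assumes d: "is_cone C (attach T S n x) X L d"
  shows "\<exists>u\<in>hom C L M. \<forall>m. \<forall>z\<in>Simp (attach T S n x) m. Comp C (attach_pullback_cone m z) u = d m z"
proof -
  note facts = attachableD[OF att] and p = pullbackD[OF pb r(1) y(1)] and cS = Map_cone[OF MS]
  obtain u1 where u1: "u1 \<in> hom C L MS" "\<And>m z. z \<in> Simp S m \<Longrightarrow> Comp C (cS m z) u1 = d m z"
    using Map_factor[OF MS cone_restrict[OF facts(5) d]] by blast
  have u2: "d n x \<in> hom C L (SOb X n)" using cone_hom[OF d facts(6)] .
  have "Comp C r u1 = Comp C y (d n x)"
    by (rule Map_eqI[OF MB X Comp_hom[OF u1(1) r(1)] Comp_hom[OF u2 y(1)]])
      (use attach_pullback_bdry_leg[OF _ u1(1) u2] u1(2) att cone_nat[OF d _ facts(6)] in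
        \<open>auto simp: attachable_def bdry_simps attach_simps\<close>)
  then obtain u where u: "u \<in> hom C L M" "Comp C p1 u = u1" "Comp C p2 u = d n x"
    using pullback_factor[OF pb r(1) y(1) u1(1) u2] by blast
  have "Comp C (attach_pullback_cone m z) u = d m z" if z: "z \<in> Simp (attach T S n x) m" for m z
    by (rule attach_cone_eqI[OF att cone_comp[OF X attach_pullback_cone_is_cone u(1)] d _ _ z])
      (use Comp_assoc[OF u(1) p(1) cone_hom[OF cS]] u u1 attach_pullback_cone_at
        in \<open>auto simp: attach_cone_def\<close>)
  with u(1) show ?thesis by blast
qed

lemma Map_attach_of_pullback: "is_Map C (attach T S n x) X M attach_pullback_cone"
proof (rule MapI[OF attach_pullback_cone_is_cone Map_attach_factor])
  note facts = attachableD[OF att] and p = pullbackD[OF pb r(1) y(1)] and cS = Map_cone[OF MS]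
  fix L u u' assume u: "u \<in> hom C L M" "u' \<in> hom C L M"
    and eq: "\<And>m z. z \<in> Simp (attach T S n x) m \<Longrightarrow>
      Comp C (attach_pullback_cone m z) u = Comp C (attach_pullback_cone m z) u'"
  have "Comp C p1 u = Comp C p1 u'"
    by (rule Map_eqI[OF MS X Comp_hom[OF u(1) p(1)] Comp_hom[OF u(2) p(1)]])
      (use eq[OF subsset_Simp[OF facts(5)]] Comp_assoc[OF u(1) p(1) cone_hom[OF cS]]
        Comp_assoc[OF u(2) p(1) cone_hom[OF cS]] in \<open>simp add: attach_cone_def\<close>)
  moreover have "Comp C p2 u = Comp C p2 u'" using eq[OF facts(6)] attach_pullback_cone_at by simp
  ultimately show "u = u'" using pullback_jointly_monic[OF pb r(1) y(1) u] by blast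
qed

end

lemma relcone_along_attach:
  assumes att: "attachable T S n x" and Q: "is_relcone C S (attach T S n x) X Y f Q \<gamma> \<delta>"
  shows "is_relcone C (bdry n) (simplex n) X Y f Q
    (\<lambda>m \<theta>. \<gamma> m (Act T m n \<theta> x)) (\<lambda>m \<theta>. \<delta> m (Act T m n \<theta> x))"
proof -
  note facts = attachableD[OF att]
  have "\<theta> \<in> dmor m n \<and> Act T m n \<theta> x \<in> Simp S m" if "\<theta> \<in> Simp (bdry n) m" for m \<theta>
    using att that unfolding attachable_def bdry_simps by auto
  moreover have "\<theta> \<in> dmor m n \<and> Act T m n \<theta> x \<in> Simp (attach T S n x) m"
    if "\<theta> \<in> Simp (simplex n) m" for m \<theta>
    using that by (auto simp: simplex_simps attach_simps)
  ultimately show ?thesis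
    unfolding is_relcone_def
    using cone_along_simplex[OF facts(1,2) _ bdry_simps(2) relcone_cone(1)[OF Q]]
      cone_along_simplex[OF facts(4,2) _ simplex_simps(2) relcone_cone(2)[OF Q]] relcone_cone(3)[OF Q]
    by simp
qed

text \<open>For attachable \<open>x\<close>, the comparison map \<open>u\<close> of \<open>S \<subseteq> S \<union> x\<close> is the pullback of the hypercover map
  \<open>vn : X\<^sub>n \<rightarrow> Map(\<partial>\<Delta>\<^sup>n \<hookrightarrow> \<Delta>\<^sup>n, f)\<close> along the restriction \<open>r\<close> along \<open>x\<close>.\<close>
context
  fixes T S n x X Y f M cX Q \<gamma> \<delta> Pn \<alpha>n \<beta>n vn u r
  assumes att: "attachable T S n x" and f: "is_smap C X Y f"
    and M: "is_Map C (attach T S n x) X M cX"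
    and Q: "is_relMap C S (attach T S n x) X Y f Q \<gamma> \<delta>"
    and Pn: "is_relMap C (bdry n) (simplex n) X Y f Pn \<alpha>n \<beta>n"
    and vn: "is_comparison C (bdry n) (simplex n) f Pn \<alpha>n \<beta>n (SOb X n) (\<lambda>m \<theta>. SMor X m n \<theta>) vn"
    and u: "is_comparison C S (attach T S n x) f Q \<gamma> \<delta> M cX u"
    and r: "r \<in> hom C Q Pn"
      "\<And>m \<theta>. \<theta> \<in> Simp (bdry n) m \<Longrightarrow> Comp C (\<alpha>n m \<theta>) r = \<gamma> m (Act T m n \<theta> x)"
      "\<And>m \<theta>. \<theta> \<in> Simp (simplex n) m \<Longrightarrow> Comp C (\<beta>n m \<theta>) r = \<delta> m (Act T m n \<theta> x)"
begin

lemma attach_comparison_square: "Comp C r u = Comp C vn (cX n x)"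
proof -
  note facts = attachableD[OF att] and X = smap_sobj(1)[OF f]
  note v = comparisonD[OF vn] and u = comparisonD[OF u]
  note cX = Map_cone[OF M] and PnR = relMap_relcone[OF Pn]
  have e: "cX n x \<in> hom C M (SOb X n)" using cone_hom[OF cX facts(6)] .
  have nat: "Comp C (SMor X m n \<theta>) (cX n x) = cX m (Act T m n \<theta> x)" if "\<theta> \<in> dmor m n" for m \<theta>
    using cone_nat[OF cX that facts(6)] by (simp add: attach_simps)
  show ?thesis
  proof (rule relMap_eqI[OF Pn f Comp_hom[OF u(1) r(1)] Comp_hom[OF e v(1)]])
    fix m \<theta> assume \<theta>: "\<theta> \<in> Simp (bdry n) m"
    then have "\<theta> \<in> dmor m n" "Act T m n \<theta> x \<in> Simp S m"
      using att unfolding attachable_def bdry_simps by auto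
    then show "Comp C (\<alpha>n m \<theta>) (Comp C r u) = Comp C (\<alpha>n m \<theta>) (Comp C vn (cX n x))"
      using Comp_assoc[OF u(1) r(1) cone_hom[OF relcone_cone(1)[OF PnR] \<theta>]] r(2)[OF \<theta>] u(2)
        Comp_assoc[OF e v(1) cone_hom[OF relcone_cone(1)[OF PnR] \<theta>]] v(2)[OF \<theta>] nat by simp
  next
    fix m \<theta> assume \<theta>: "\<theta> \<in> Simp (simplex n) m"
    then have \<theta>': "\<theta> \<in> dmor m n" "Act T m n \<theta> x \<in> Simp (attach T S n x) m"
      by (auto simp: simplex_simps attach_simps)
    have "Comp C (\<beta>n m \<theta>) (Comp C vn (cX n x)) = Comp C (Comp C (f m) (SMor X m n \<theta>)) (cX n x)"
      using Comp_assoc[OF e v(1) cone_hom[OF relcone_cone(2)[OF PnR] \<theta>]] v(3)[OF \<theta>] by simp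
    also have "\<dots> = Comp C (f m) (cX m (Act T m n \<theta> x))"
      using Comp_assoc[OF e sobj_hom[OF X \<theta>'(1)] smap_hom[OF f]] nat[OF \<theta>'(1)] by simp
    finally show "Comp C (\<beta>n m \<theta>) (Comp C r u) = Comp C (\<beta>n m \<theta>) (Comp C vn (cX n x))"
      using Comp_assoc[OF u(1) r(1) cone_hom[OF relcone_cone(2)[OF PnR] \<theta>]] r(3)[OF \<theta>] u(3)[OF \<theta>'(2)]
      by simp
  qed
qed

lemma attach_comparison_compat:
  assumes h1: "h1 \<in> hom C L Q" and h2: "h2 \<in> hom C L (SOb X n)" and h: "Comp C r h1 = Comp C vn h2"
    and \<theta>: "\<theta> \<in> dmor m n" "\<not> dsurj m n \<theta>"
  shows "Comp C (\<gamma> m (Act T m n \<theta> x)) h1 = Comp C (SMor X m n \<theta>) h2"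
proof -
  note v = comparisonD[OF vn]
  have \<theta>': "\<theta> \<in> Simp (bdry n) m" using \<theta> bdry_simps by simp
  note \<alpha>n = cone_hom[OF relcone_cone(1)[OF relMap_relcone[OF Pn]] \<theta>']
  show ?thesis
    using Comp_assoc[OF h1 r(1) \<alpha>n] r(2)[OF \<theta>'] h Comp_assoc[OF h2 v(1) \<alpha>n] v(2)[OF \<theta>'] by simp
qed

lemma attach_comparison_at:
  assumes h1: "h1 \<in> hom C L Q" and h2: "h2 \<in> hom C L (SOb X n)" and h: "Comp C r h1 = Comp C vn h2"
  shows "Comp C (\<delta> n x) h1 = Comp C (f n) h2"
proof -
  note v = comparisonD[OF vn]
  have id: "did n \<in> Simp (simplex n) n" using did_dmor by (simp add: simplex_simps)
  note \<beta>n = cone_hom[OF relcone_cone(2)[OF relMap_relcone[OF Pn]] id]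
  have "\<delta> n x = Comp C (\<beta>n n (did n)) r" using r(3)[OF id] sset_id[OF attachableD(3,2)[OF att]] by simp
  then show ?thesis
    using Comp_assoc[OF h1 r(1) \<beta>n] h Comp_assoc[OF h2 v(1) \<beta>n] v(3)[OF id] sobj_did[OF smap_sobj(1)[OF f]]
      Comp_Idm_right[OF smap_hom[OF f]] by simp
qed

lemma attach_comparison_factor:
  assumes h1: "h1 \<in> hom C L Q" and h2: "h2 \<in> hom C L (SOb X n)" and h: "Comp C r h1 = Comp C vn h2"
  shows "\<exists>z\<in>hom C L M. Comp C u z = h1 \<and> Comp C (cX n x) z = h2"
proof -
  note facts = attachableD[OF att] and X = smap_sobj(1)[OF f] and Y = smap_sobj(2)[OF f]
  note u = comparisonD[OF u] and cX = Map_cone[OF M] and QR = relMap_relcone[OF Q]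
  note \<gamma> = relcone_cone(1)[OF QR] and \<delta> = relcone_cone(2)[OF QR]
  note compat = attach_comparison_compat[OF h1 h2 h]
  let ?c = "attach_cone C T S n x X (\<lambda>m y. Comp C (\<gamma> m y) h1) h2"
  note c = attach_cone_is_cone[OF att X cone_comp[OF X \<gamma> h1] h2 compat]
    and c_x = attach_cone_at[OF att X cone_comp[OF X \<gamma> h1] h2 compat]
  obtain z where z: "z \<in> hom C L M" "\<And>m y. y \<in> Simp (attach T S n x) m \<Longrightarrow> Comp C (cX m y) z = ?c m y"
    using Map_factor[OF M c] by blast
  have f_c: "Comp C (f m) (?c m y) = Comp C (\<delta> m y) h1" if y: "y \<in> Simp (attach T S n x) m" for m y
    by (rule attach_cone_eqI[OF att cone_smap[OF f c] cone_comp[OF Y \<delta> h1] _ _ y])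
      (use Comp_assoc[OF h1 cone_hom[OF \<gamma>] smap_hom[OF f]] relcone_cone(3)[OF QR] c_x
        attach_comparison_at[OF h1 h2 h] in \<open>simp_all add: attach_cone_def\<close>)
  have "Comp C u z = h1"
  proof (rule relMap_eqI[OF Q f Comp_hom[OF z(1) u(1)] h1])
    fix m y assume y: "y \<in> Simp S m"
    show "Comp C (\<gamma> m y) (Comp C u z) = Comp C (\<gamma> m y) h1"
      using Comp_assoc[OF z(1) u(1) cone_hom[OF \<gamma> y]] u(2)[OF y] z(2)[OF subsset_Simp[OF facts(5) y]] y
      by (simp add: attach_cone_def)
  next
    fix m y assume y: "y \<in> Simp (attach T S n x) m"
    show "Comp C (\<delta> m y) (Comp C u z) = Comp C (\<delta> m y) h1"
      using Comp_assoc[OF z(1) u(1) cone_hom[OF \<delta> y]] u(3)[OF y]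
        Comp_assoc[OF z(1) cone_hom[OF cX y] smap_hom[OF f]] z(2)[OF y] f_c[OF y] by simp
  qed
  moreover have "Comp C (cX n x) z = h2" using z(2)[OF facts(6)] c_x by simp
  ultimately show ?thesis using z(1) by blast
qed

lemma attach_comparison_jointly_monic:
  assumes w: "w \<in> hom C L M" "w' \<in> hom C L M"
    and eq_u: "Comp C u w = Comp C u w'" and eq_x: "Comp C (cX n x) w = Comp C (cX n x) w'"
  shows "w = w'"
proof (rule Map_eqI[OF M smap_sobj(1)[OF f] w])
  note X = smap_sobj(1)[OF f] and u = comparisonD[OF u]
  note cX = Map_cone[OF M] and \<gamma> = relcone_cone(1)[OF relMap_relcone[OF Q]]
  fix m y assume y: "y \<in> Simp (attach T S n x) m"
  show "Comp C (cX m y) w = Comp C (cX m y) w'"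
  proof (rule attach_cone_eqI[OF att cone_comp[OF X cX w(1)] cone_comp[OF X cX w(2)] _ eq_x y])
    fix m y assume y: "y \<in> Simp S m"
    show "Comp C (cX m y) w = Comp C (cX m y) w'"
      using Comp_assoc[OF w(1) u(1) cone_hom[OF \<gamma> y]] Comp_assoc[OF w(2) u(1) cone_hom[OF \<gamma> y]] u(2)[OF y]
        eq_u by simp
  qed
qed

lemma attach_comparison_pullback: "is_pullback C r vn M u (cX n x)"
  using pullbackI[OF r(1) comparisonD(1)[OF vn] comparisonD(1)[OF u]
      cone_hom[OF Map_cone[OF M] attachableD(6)[OF att]] attach_comparison_square]
    attach_comparison_factor attach_comparison_jointly_monic by blast

end

text \<open>For \<open>S \<subseteq> S' \<subseteq> T\<close>: \<open>Map(S' \<hookrightarrow> T, f) = Map(S \<hookrightarrow> T, f) \<times>\<^bsub>Map(S \<hookrightarrow> S', f)\<^esub> Map(S', X)\<close>.\<close>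
context
  fixes S S' T X Y f P \<alpha> \<beta> P' \<alpha>' \<beta>' Q \<gamma> \<delta> M cX w p q u
  assumes f: "is_smap C X Y f" and SS': "is_subsset S S'" and S'T: "is_subsset S' T"
    and P: "is_relMap C S T X Y f P \<alpha> \<beta>" and P': "is_relMap C S' T X Y f P' \<alpha>' \<beta>'"
    and Q: "is_relMap C S S' X Y f Q \<gamma> \<delta>" and M: "is_Map C S' X M cX"
    and w: "w \<in> hom C P' P" "\<And>m y. y \<in> Simp S m \<Longrightarrow> Comp C (\<alpha> m y) w = \<alpha>' m y"
      "\<And>m y. y \<in> Simp T m \<Longrightarrow> Comp C (\<beta> m y) w = \<beta>' m y"
    and p: "p \<in> hom C P' M" "\<And>m y. y \<in> Simp S' m \<Longrightarrow> Comp C (cX m y) p = \<alpha>' m y"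
    and q: "q \<in> hom C P Q" "\<And>m y. y \<in> Simp S m \<Longrightarrow> Comp C (\<gamma> m y) q = \<alpha> m y"
      "\<And>m y. y \<in> Simp S' m \<Longrightarrow> Comp C (\<delta> m y) q = \<beta> m y"
    and u: "is_comparison C S S' f Q \<gamma> \<delta> M cX u"
begin

lemma relMap_restrict_square: "Comp C q w = Comp C u p"
proof (rule relMap_eqI[OF Q f Comp_hom[OF w(1) q(1)] Comp_hom[OF p(1) comparisonD(1)[OF u]]])
  note u = comparisonD[OF u] and QR = relMap_relcone[OF Q]
  fix m y assume y: "y \<in> Simp S m"
  show "Comp C (\<gamma> m y) (Comp C q w) = Comp C (\<gamma> m y) (Comp C u p)"
    using Comp_assoc[OF w(1) q(1) cone_hom[OF relcone_cone(1)[OF QR] y]] q(2)[OF y] w(2)[OF y]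
      Comp_assoc[OF p(1) u(1) cone_hom[OF relcone_cone(1)[OF QR] y]] u(2)[OF y]
      p(2)[OF subsset_Simp[OF SS' y]] by simp
next
  note u = comparisonD[OF u] and cX = Map_cone[OF M]
  note QR = relMap_relcone[OF Q] and P'R = relMap_relcone[OF P']
  fix m y assume y: "y \<in> Simp S' m"
  have "Comp C (\<delta> m y) (Comp C q w) = Comp C (f m) (\<alpha>' m y)"
    using Comp_assoc[OF w(1) q(1) cone_hom[OF relcone_cone(2)[OF QR] y]] q(3)[OF y]
      w(3)[OF subsset_Simp[OF S'T y]] relcone_cone(3)[OF P'R y] by simp
  also have "\<dots> = Comp C (\<delta> m y) (Comp C u p)"
    using Comp_assoc[OF p(1) u(1) cone_hom[OF relcone_cone(2)[OF QR] y]] u(3)[OF y]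
      Comp_assoc[OF p(1) cone_hom[OF cX y] smap_hom[OF f]] p(2)[OF y] by simp
  finally show "Comp C (\<delta> m y) (Comp C q w) = Comp C (\<delta> m y) (Comp C u p)" .
qed

lemma relMap_restrict_factor:
  assumes h1: "h1 \<in> hom C L P" and h2: "h2 \<in> hom C L M" and h: "Comp C q h1 = Comp C u h2"
  shows "\<exists>z\<in>hom C L P'. Comp C w z = h1 \<and> Comp C p z = h2"
proof -
  note u = comparisonD[OF u] and cX = Map_cone[OF M] and X = smap_sobj(1)[OF f] and Y = smap_sobj(2)[OF f]
  note QR = relMap_relcone[OF Q] and PR = relMap_relcone[OF P]
  note \<gamma> = relcone_cone(1)[OF QR] and \<delta> = relcone_cone(2)[OF QR] and \<beta> = relcone_cone(2)[OF PR]
  have "Comp C (f m) (Comp C (cX m y) h2) = Comp C (\<beta> m y) h1" if y: "y \<in> Simp S' m" for m y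
    using Comp_assoc[OF h2 cone_hom[OF cX y] smap_hom[OF f]] Comp_assoc[OF h2 u(1) cone_hom[OF \<delta> y]]
      u(3)[OF y] h Comp_assoc[OF h1 q(1) cone_hom[OF \<delta> y]] q(3)[OF y] by simp
  then have "is_relcone C S' T X Y f L (\<lambda>m y. Comp C (cX m y) h2) (\<lambda>m y. Comp C (\<beta> m y) h1)"
    unfolding is_relcone_def using cone_comp[OF X cX h2] cone_comp[OF Y \<beta> h1] by simp
  then obtain z where z: "z \<in> hom C L P'"
    "\<And>m y. y \<in> Simp S' m \<Longrightarrow> Comp C (\<alpha>' m y) z = Comp C (cX m y) h2"
    "\<And>m y. y \<in> Simp T m \<Longrightarrow> Comp C (\<beta>' m y) z = Comp C (\<beta> m y) h1"
    using relMap_factor[OF P'] by blast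
  have "Comp C w z = h1"
  proof (rule relMap_eqI[OF P f Comp_hom[OF z(1) w(1)] h1])
    fix m y assume y: "y \<in> Simp S m"
    show "Comp C (\<alpha> m y) (Comp C w z) = Comp C (\<alpha> m y) h1"
      using Comp_assoc[OF z(1) w(1) cone_hom[OF relcone_cone(1)[OF PR] y]] w(2)[OF y]
        z(2)[OF subsset_Simp[OF SS' y]] Comp_assoc[OF h2 u(1) cone_hom[OF \<gamma> y]] u(2)[OF y] h
        Comp_assoc[OF h1 q(1) cone_hom[OF \<gamma> y]] q(2)[OF y] by simp
  next
    fix m y assume y: "y \<in> Simp T m"
    show "Comp C (\<beta> m y) (Comp C w z) = Comp C (\<beta> m y) h1"
      using Comp_assoc[OF z(1) w(1) cone_hom[OF \<beta> y]] w(3)[OF y] z(3)[OF y] by simp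
  qed
  moreover have "Comp C p z = h2"
    by (rule Map_eqI[OF M X Comp_hom[OF z(1) p(1)] h2])
      (use Comp_assoc[OF z(1) p(1) cone_hom[OF cX]] p(2) z(2) in simp)
  ultimately show ?thesis using z(1) by blast
qed

lemma relMap_restrict_jointly_monic:
  assumes z: "z \<in> hom C L P'" "z' \<in> hom C L P'"
    and eq_w: "Comp C w z = Comp C w z'" and eq_p: "Comp C p z = Comp C p z'"
  shows "z = z'"
proof (rule relMap_eqI[OF P' f z])
  note cX = Map_cone[OF M] and \<beta> = relcone_cone(2)[OF relMap_relcone[OF P]]
  show "Comp C (\<alpha>' m y) z = Comp C (\<alpha>' m y) z'" if y: "y \<in> Simp S' m" for m y
    using Comp_assoc[OF z(1) p(1) cone_hom[OF cX y]] Comp_assoc[OF z(2) p(1) cone_hom[OF cX y]]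
      p(2)[OF y] eq_p by simp
  show "Comp C (\<beta>' m y) z = Comp C (\<beta>' m y) z'" if y: "y \<in> Simp T m" for m y
    using Comp_assoc[OF z(1) w(1) cone_hom[OF \<beta> y]] Comp_assoc[OF z(2) w(1) cone_hom[OF \<beta> y]]
      w(3)[OF y] eq_w by simp
qed

lemma relMap_restrict_pullback: "is_pullback C q u P' w p"
  using pullbackI[OF q(1) comparisonD(1)[OF u] w(1) p(1) relMap_restrict_square]
    relMap_restrict_factor relMap_restrict_jointly_monic by blast

end

end

section \<open>Existence of mapping objects\<close>

context finite_limits
begin

lemma has_Map_attach:
  assumes att: "attachable T S n x" and X: "is_sobj C X"
    and "has_Map C S X" "has_Map C (bdry n) X"
  shows "has_Map C (attach T S n x) X"
proof -
  note facts = attachableD[OF att]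
  obtain MS cS MB cB where MS: "is_Map C S X MS cS" and MB: "is_Map C (bdry n) X MB cB"
    using assms(3,4) unfolding has_Map_def by blast
  have along_x: "\<theta> \<in> dmor m n \<and> Act T m n \<theta> x \<in> Simp S m" if "\<theta> \<in> Simp (bdry n) m" for m \<theta>
    using att that unfolding attachable_def bdry_simps by auto
  obtain r where r: "r \<in> hom C MS MB"
    "\<And>m \<theta>. \<theta> \<in> Simp (bdry n) m \<Longrightarrow> Comp C (cB m \<theta>) r = cS m (Act T m n \<theta> x)"
    using Map_factor[OF MB cone_along_simplex[OF facts(1,2) along_x bdry_simps(2) Map_cone[OF MS]]]
    by blast
  obtain y where y: "y \<in> hom C (SOb X n) MB"
    "\<And>m \<theta>. \<theta> \<in> Simp (bdry n) m \<Longrightarrow> Comp C (cB m \<theta>) y = SMor X m n \<theta>"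
    using Map_factor[OF MB cone_restrict[OF bdry_subsset Map_cone[OF Map_simplex[OF X]]]] by blast
  obtain M p1 p2 where "is_pullback C r y M p1 p2" using pullback_exists[OF r(1) y(1)] by blast
  from Map_attach_of_pullback[OF att X MS MB r y this] show ?thesis unfolding has_Map_def by blast
qed

lemma has_Map_extend:
  assumes Z: "is_sobj C Z" and T: "finite_sset T"
  shows "is_subsset S T \<Longrightarrow> has_Map C S Z \<Longrightarrow>
    (\<And>k y. (k, y) \<in> nondeg_outside T S \<Longrightarrow> has_Map C (bdry k) Z) \<Longrightarrow> has_Map C T Z"
proof (induction "card (nondeg_outside T S)" arbitrary: S rule: less_induct)
  case less
  show ?case
  proof (cases "nondeg_outside T S = {}")
    case True
    then show ?thesis
      using less.prems(2) Map_same_Simp[OF less.prems(1) nondeg_outside_empty[OF less.prems(1)]]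
      unfolding has_Map_def by blast
  next
    case False
    with less.prems(1) obtain n x where att: "attachable T S n x"
      and smaller: "nondeg_outside T (attach T S n x) \<subset> nondeg_outside T S"
      by (rule exists_attachable)
    have "(n, x) \<in> nondeg_outside T S" using att unfolding attachable_def nondeg_outside_def by simp
    then have "has_Map C (attach T S n x) Z" using has_Map_attach[OF att Z less.prems(2,3)] by simp
    moreover have "has_Map C (bdry k) Z" if "(k, y) \<in> nondeg_outside T (attach T S n x)" for k y
      using less.prems(3) smaller that by blast
    ultimately show ?thesis
      using less.hyps[OF psubset_card_mono[OF finite_nondeg_outside[OF T] smaller] attachableD(4)[OF att]]
      by blast
  qed
qed

lemma has_Map_bdry:
  assumes Z: "is_sobj C Z"
  shows "has_Map C (bdry n) Z"
proof (induction n rule: less_induct)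
  case (less n)
  define E :: "(nat \<Rightarrow> nat) sset" where "E = \<lparr>Simp = (\<lambda>_. {}), Act = Act (bdry n)\<rparr>"
  have "is_sset E" unfolding is_sset_def E_def by simp
  then have E: "is_subsset E (bdry n)" unfolding is_subsset_def using bdry_sset by (simp add: E_def)
  obtain t where "is_terminal C t" by (rule terminal_exists)
  then have "has_Map C E Z" using Map_empty[of C t E] unfolding has_Map_def by (auto simp: E_def)
  moreover have "has_Map C (bdry k) Z" if "(k, y) \<in> nondeg_outside (bdry n) E" for k y
    using that bdry_nondeg_dim_less less unfolding nondeg_outside_def by blast
  ultimately show ?case using has_Map_extend[OF Z finite_sset_bdry E] by blast
qed

end

section \<open>Comparison maps are covers\<close>

definition comparisons_cover ::
  "('o,'m) cat \<Rightarrow> 'm set \<Rightarrow> 'a sset \<Rightarrow> 'a sset \<Rightarrow> ('o,'m) sobj \<Rightarrow> ('o,'m) sobj \<Rightarrow> (nat \<Rightarrow> 'm) \<Rightarrow> bool"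
  where "comparisons_cover C cov S T X Y f \<longleftrightarrow> (\<forall>K k P \<alpha> \<beta> v. is_Map C T X K k \<longrightarrow>
    is_relMap C S T X Y f P \<alpha> \<beta> \<longrightarrow> is_comparison C S T f P \<alpha> \<beta> K k v \<longrightarrow> v \<in> cov)"

locale descent =
  fixes C :: "('o,'m) cat" and cov :: "'m set"
  assumes descent_category: "descent_category C cov"

sublocale descent \<subseteq> finite_limits C
  using descent_category unfolding descent_category_def by unfold_locales auto

context descent
begin

lemma Idm_cov: "a \<in> Obj C \<Longrightarrow> Idm C a \<in> cov"
  using descent_category unfolding descent_category_def by blast

lemma cov_Comp:
  assumes "f \<in> cov" "g \<in> cov" "f \<in> hom C a b" "g \<in> hom C b c"
  shows "Comp C g f \<in> cov"
proof -
  have "\<forall>f\<in>cov. \<forall>g\<in>cov. Cod C f = Dom C g \<longrightarrow> Comp C g f \<in> cov"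
    using descent_category unfolding descent_category_def by blast
  then show ?thesis using assms unfolding hom_def by simp
qed

lemma cov_pullback: "is_pullback C a b P p1 p2 \<Longrightarrow> b \<in> cov \<Longrightarrow> p1 \<in> cov"
  using descent_category unfolding descent_category_def by blast

text \<open>An isomorphism is a pullback of an identity.\<close>
lemma iso_cov:
  assumes v: "v \<in> hom C K P" and g: "g \<in> hom C P K"
    and gv: "Comp C g v = Idm C K" and vg: "Comp C v g = Idm C P"
  shows "v \<in> cov"
proof -
  have P: "P \<in> Obj C" using hom_obj[OF v] by simp
  note id = Idm_hom[OF P]
  have cancel: "Comp C g (Comp C v z) = z" if "z \<in> hom C Q K" for z Q
    using Comp_assoc[OF that v g] gv Comp_Idm_left[OF that] by simp
  have "is_pullback C (Idm C P) (Idm C P) K v v"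
  proof (rule pullbackI[OF id id v v refl])
    fix Q q1 q2 assume q: "q1 \<in> hom C Q P" "q2 \<in> hom C Q P" "Comp C (Idm C P) q1 = Comp C (Idm C P) q2"
    have "Comp C v (Comp C g q1) = q1" using Comp_assoc[OF q(1) g v] vg Comp_Idm_left[OF q(1)] by simp
    then show "\<exists>u\<in>hom C Q K. Comp C v u = q1 \<and> Comp C v u = q2"
      using Comp_hom[OF q(1) g] q Comp_Idm_left[OF q(1)] Comp_Idm_left[OF q(2)] by auto
  next
    fix Q u u' assume "u \<in> hom C Q K" "u' \<in> hom C Q K" "Comp C v u = Comp C v u'"
    then show "u = u'" using cancel by metis
  qed
  then show ?thesis using cov_pullback Idm_cov[OF P] by blast
qed

lemma comparisons_cover_same_Simp:
  assumes f: "is_smap C X Y f" and ST: "is_subsset S T" and eq: "\<And>n. Simp S n = Simp T n"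
  shows "comparisons_cover C cov S T X Y f"
  unfolding comparisons_cover_def
proof (intro allI impI)
  fix K k P \<alpha> \<beta> v
  assume K: "is_Map C T X K k" and P: "is_relMap C S T X Y f P \<alpha> \<beta>"
    and v: "is_comparison C S T f P \<alpha> \<beta> K k v"
  note v = comparisonD[OF v] and PR = relMap_relcone[OF P] and X = smap_sobj(1)[OF f]
  note \<alpha> = relcone_cone(1)[OF PR] and \<beta> = relcone_cone(2)[OF PR] and k = Map_cone[OF K]
  have K_obj: "K \<in> Obj C" and P_obj: "P \<in> Obj C" using hom_obj[OF v(1)] by auto
  obtain g where g: "g \<in> hom C P K" "\<And>n y. y \<in> Simp T n \<Longrightarrow> Comp C (k n y) g = \<alpha> n y"
    using Map_factor[OF K cone_same_Simp[OF ST eq \<alpha>]] by (metis eq)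
  have "Comp C g v = Idm C K"
    by (rule Map_eqI[OF K X Comp_hom[OF v(1) g(1)] Idm_hom[OF K_obj]])
      (use Comp_assoc[OF v(1) g(1) cone_hom[OF k]] g(2) v(2) eq Comp_Idm_right[OF cone_hom[OF k]] in simp)
  moreover have "Comp C v g = Idm C P"
  proof (rule relMap_eqI[OF P f Comp_hom[OF g(1) v(1)] Idm_hom[OF P_obj]])
    fix n y assume y: "y \<in> Simp S n"
    then show "Comp C (\<alpha> n y) (Comp C v g) = Comp C (\<alpha> n y) (Idm C P)"
      using Comp_assoc[OF g(1) v(1) cone_hom[OF \<alpha> y]] v(2) g(2) eq Comp_Idm_right[OF cone_hom[OF \<alpha> y]]
      by simp
  next
    fix n y assume y: "y \<in> Simp T n"
    have "Comp C (\<beta> n y) (Comp C v g) = Comp C (f n) (\<alpha> n y)"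
      using Comp_assoc[OF g(1) v(1) cone_hom[OF \<beta> y]] v(3)[OF y] g(2)[OF y]
        Comp_assoc[OF g(1) cone_hom[OF k y] smap_hom[OF f]] by simp
    then show "Comp C (\<beta> n y) (Comp C v g) = Comp C (\<beta> n y) (Idm C P)"
      using relcone_cone(3)[OF PR] y eq Comp_Idm_right[OF cone_hom[OF \<beta> y]] by simp
  qed
  ultimately show "v \<in> cov" using iso_cov[OF v(1) g(1)] by blast
qed

text \<open>The comparison map for \<open>S \<subseteq> T\<close> factors through the one for \<open>S' \<subseteq> T\<close>, followed by a pullback of the
  one for \<open>S \<subseteq> S'\<close> (\<open>relMap_restrict_pullback\<close>).\<close>
lemma comparison_cover_step:
  assumes f: "is_smap C X Y f" and SS': "is_subsset S S'" and S'T: "is_subsset S' T"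
    and P: "is_relMap C S T X Y f P \<alpha> \<beta>" and v: "is_comparison C S T f P \<alpha> \<beta> K k v"
    and P': "is_relMap C S' T X Y f P' \<alpha>' \<beta>'" and v': "is_comparison C S' T f P' \<alpha>' \<beta>' K k v'"
    and Q: "is_relMap C S S' X Y f Q \<gamma> \<delta>" and M: "is_Map C S' X M cX"
    and u: "is_comparison C S S' f Q \<gamma> \<delta> M cX u"
    and v'_cov: "v' \<in> cov" and u_cov: "u \<in> cov"
  shows "v \<in> cov"
proof -
  note PR = relMap_relcone[OF P] and P'R = relMap_relcone[OF P']
  have "is_relcone C S T X Y f P' \<alpha>' \<beta>'"
    unfolding is_relcone_def using cone_restrict[OF SS' relcone_cone(1)[OF P'R]] relcone_cone(2,3)[OF P'R]
      subsset_Simp[OF SS'] by simp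
  then obtain w where w: "w \<in> hom C P' P" "\<And>m y. y \<in> Simp S m \<Longrightarrow> Comp C (\<alpha> m y) w = \<alpha>' m y"
    "\<And>m y. y \<in> Simp T m \<Longrightarrow> Comp C (\<beta> m y) w = \<beta>' m y"
    using relMap_factor[OF P] by blast
  obtain p where p: "p \<in> hom C P' M" "\<And>m y. y \<in> Simp S' m \<Longrightarrow> Comp C (cX m y) p = \<alpha>' m y"
    using Map_factor[OF M relcone_cone(1)[OF P'R]] by blast
  have "is_relcone C S S' X Y f P \<alpha> \<beta>"
    unfolding is_relcone_def using relcone_cone(1,3)[OF PR] cone_restrict[OF S'T relcone_cone(2)[OF PR]] by simp
  then obtain q where q: "q \<in> hom C P Q" "\<And>m y. y \<in> Simp S m \<Longrightarrow> Comp C (\<gamma> m y) q = \<alpha> m y"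
    "\<And>m y. y \<in> Simp S' m \<Longrightarrow> Comp C (\<delta> m y) q = \<beta> m y"
    using relMap_factor[OF Q] by blast
  have "w \<in> cov" using cov_pullback[OF relMap_restrict_pullback[OF f SS' S'T P P' Q M w p q u] u_cov] .
  moreover have "v = Comp C w v'"
    using comparison_unique[OF P f v comparison_restrict[OF SS' P v' w]] .
  ultimately show ?thesis using cov_Comp[OF v'_cov _ comparisonD(1)[OF v'] w(1)] by simp
qed

lemma comparisons_cover_trans:
  assumes f: "is_smap C X Y f" and SS': "is_subsset S S'" and S'T: "is_subsset S' T"
    and maps: "has_Map C S X" "has_Map C S Y" "has_Map C S' X" "has_Map C S' Y" "has_Map C T Y"
    and cov_SS': "comparisons_cover C cov S S' X Y f" and cov_S'T: "comparisons_cover C cov S' T X Y f"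
  shows "comparisons_cover C cov S T X Y f"
  unfolding comparisons_cover_def
proof (intro allI impI)
  fix K k P \<alpha> \<beta> v
  assume K: "is_Map C T X K k" and P: "is_relMap C S T X Y f P \<alpha> \<beta>" and v: "is_comparison C S T f P \<alpha> \<beta> K k v"
  obtain P' \<alpha>' \<beta>' where P': "is_relMap C S' T X Y f P' \<alpha>' \<beta>'"
    using relMap_exists[OF f S'T maps(3-5)] by blast
  obtain v' where v': "is_comparison C S' T f P' \<alpha>' \<beta>' K k v'"
    using comparison_exists[OF P' S'T f Map_cone[OF K]] by blast
  obtain Q \<gamma> \<delta> where Q: "is_relMap C S S' X Y f Q \<gamma> \<delta>"
    using relMap_exists[OF f SS' maps(1,2,4)] by blast
  obtain M cX where M: "is_Map C S' X M cX" using maps(3) unfolding has_Map_def by blast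
  obtain u where u: "is_comparison C S S' f Q \<gamma> \<delta> M cX u"
    using comparison_exists[OF Q SS' f Map_cone[OF M]] by blast
  have "v' \<in> cov" "u \<in> cov"
    using cov_S'T K P' v' cov_SS' M Q u unfolding comparisons_cover_def by blast+
  then show "v \<in> cov" using comparison_cover_step[OF f SS' S'T P v P' v' Q M u] by blast
qed

lemma hypercover_comparison:
  assumes H: "hypercover C cov X Y f"
  obtains Pn \<alpha>n \<beta>n vn where "is_relMap C (bdry n) (simplex n) X Y f Pn \<alpha>n \<beta>n"
    "is_comparison C (bdry n) (simplex n) f Pn \<alpha>n \<beta>n (SOb X n) (\<lambda>m \<theta>. SMor X m n \<theta>) vn" "vn \<in> cov"
proof -
  have f: "is_smap C X Y f" using H unfolding hypercover_def by simp
  note X = smap_sobj(1)[OF f] and Y = smap_sobj(2)[OF f]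
  obtain MBX cBX MBY cBY where "is_Map C (bdry n) X MBX cBX" "is_Map C (bdry n) Y MBY cBY"
    using has_Map_bdry[OF X] has_Map_bdry[OF Y] unfolding has_Map_def by blast
  then obtain P v where R: "is_relmatch C (bdry n) (simplex n) X Y f (SOb X n) (\<lambda>m \<theta>. SMor X m n \<theta>) P v"
    using relmatch_exists[OF f bdry_subsset _ _ Map_simplex[OF Y] Map_cone[OF Map_simplex[OF X]]] by blast
  moreover have "v \<in> cov" using H R unfolding hypercover_def by blast
  moreover obtain \<alpha>n \<beta>n where "is_relMap C (bdry n) (simplex n) X Y f P \<alpha>n \<beta>n"
    "is_comparison C (bdry n) (simplex n) f P \<alpha>n \<beta>n (SOb X n) (\<lambda>m \<theta>. SMor X m n \<theta>) v"
    using relmatch_imp_comparison[OF f bdry_subsset R] by blast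
  ultimately show ?thesis using that by blast
qed

lemma comparisons_cover_attach:
  assumes H: "hypercover C cov X Y f" and att: "attachable T S n x"
  shows "comparisons_cover C cov S (attach T S n x) X Y f"
  unfolding comparisons_cover_def
proof (intro allI impI)
  fix M cX Q \<gamma> \<delta> u
  assume M: "is_Map C (attach T S n x) X M cX" and Q: "is_relMap C S (attach T S n x) X Y f Q \<gamma> \<delta>"
    and u: "is_comparison C S (attach T S n x) f Q \<gamma> \<delta> M cX u"
  have f: "is_smap C X Y f" using H unfolding hypercover_def by simp
  obtain Pn \<alpha>n \<beta>n vn where Pn: "is_relMap C (bdry n) (simplex n) X Y f Pn \<alpha>n \<beta>n"
    and vn: "is_comparison C (bdry n) (simplex n) f Pn \<alpha>n \<beta>n (SOb X n) (\<lambda>m \<theta>. SMor X m n \<theta>) vn" "vn \<in> cov"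
    by (rule hypercover_comparison[OF H])
  obtain r where "r \<in> hom C Q Pn"
    "\<And>m \<theta>. \<theta> \<in> Simp (bdry n) m \<Longrightarrow> Comp C (\<alpha>n m \<theta>) r = \<gamma> m (Act T m n \<theta> x)"
    "\<And>m \<theta>. \<theta> \<in> Simp (simplex n) m \<Longrightarrow> Comp C (\<beta>n m \<theta>) r = \<delta> m (Act T m n \<theta> x)"
    using relMap_factor[OF Pn relcone_along_attach[OF att relMap_relcone[OF Q]]] by blast
  from attach_comparison_pullback[OF att f M Q Pn vn(1) u this] show "u \<in> cov"
    using cov_pullback vn(2) by blast
qed

lemma comparisons_cover_finite:
  assumes H: "hypercover C cov X Y f" and T: "finite_sset T"
  shows "is_subsset S T \<Longrightarrow> has_Map C S X \<Longrightarrow> has_Map C S Y \<Longrightarrow> has_Map C T Y \<Longrightarrow>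
    comparisons_cover C cov S T X Y f"
proof (induction "card (nondeg_outside T S)" arbitrary: S rule: less_induct)
  case less
  have f: "is_smap C X Y f" using H unfolding hypercover_def by simp
  note X = smap_sobj(1)[OF f] and Y = smap_sobj(2)[OF f] and ST = less.prems(1)
  show ?case
  proof (cases "nondeg_outside T S = {}")
    case True
    then show ?thesis using comparisons_cover_same_Simp[OF f ST nondeg_outside_empty[OF ST]] by blast
  next
    case False
    with ST obtain n x where att: "attachable T S n x"
      and smaller: "nondeg_outside T (attach T S n x) \<subset> nondeg_outside T S"
      by (rule exists_attachable)
    note facts = attachableD[OF att]
    have S'X: "has_Map C (attach T S n x) X" and S'Y: "has_Map C (attach T S n x) Y"
      using has_Map_attach[OF att X less.prems(2) has_Map_bdry[OF X]]
        has_Map_attach[OF att Y less.prems(3) has_Map_bdry[OF Y]] by auto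
    have "comparisons_cover C cov (attach T S n x) T X Y f"
      using less.hyps[OF psubset_card_mono[OF finite_nondeg_outside[OF T] smaller] facts(4) S'X S'Y
          less.prems(4)] .
    then show ?thesis
      using comparisons_cover_trans[OF f facts(5,4) less.prems(2,3) S'X S'Y less.prems(4)
          comparisons_cover_attach[OF H att]] by blast
  qed
qed

end

theorem lemma3p3:
  fixes C :: "('o,'m) cat" and cov :: "'m set"
    and T S :: "'a sset" and X Y :: "('o,'m) sobj" and f :: "nat \<Rightarrow> 'm"
    and K :: 'o and k :: "nat \<Rightarrow> 'a \<Rightarrow> 'm" and P :: 'o and v :: 'm
  assumes "descent_category C cov"
    and "finite_sset T"
    and "is_subsset S T"
    and "hypercover C cov X Y f"
    and "is_Map C T X K k"
    and "is_relmatch C S T X Y f K k P v"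
  shows "v \<in> cov"
proof -
  interpret descent C cov by (rule descent.intro) (fact assms(1))
  have f: "is_smap C X Y f" using assms(4) unfolding hypercover_def by simp
  obtain \<alpha> \<beta> where "is_relMap C S T X Y f P \<alpha> \<beta>" "is_comparison C S T f P \<alpha> \<beta> K k v"
    and maps: "has_Map C S X" "has_Map C S Y" "has_Map C T Y"
    by (rule relmatch_imp_comparison[OF f assms(3,6)])
  moreover have "comparisons_cover C cov S T X Y f"
    using comparisons_cover_finite[OF assms(4,2,3) maps] .
  ultimately show ?thesis using assms(5) unfolding comparisons_cover_def by blast
qed

end
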